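(* In the standing setting, for all $m,n\in\mathbb{N}\cup\{0\}$ one has $\overline{E_mE_n}=E_{m+n}$, where $E_mE_n=\{\alpha\beta:\alpha\in E_m,\beta\in E_n\}$ and the closure is in operator norm. In particular each $E_n$ is contained in $C^*(\rho)$.
   Context: $R$ rational of degree $\ge2$, $X$ its Julia set, Fatou set, or the Riemann sphere, $X\ne\emptyset$; $R^{\circ n}$ the $n$-th iterate ($R^{\circ0}=\mathrm{id}$). $X^\circ$ is the complement in $X$ of the grand orbit (under $x\sim y\iff R^{\circ m}(x)=R^{\circ n}(y)$ for some $m,n\ge0$) of all fixed points and branch points of the iterates $R^{\circ n}|_X$, $n\ge1$ (dense, completely invariant). $(e_x)$ is the standard basis of $\ell^2(X^\circ)$. For $n\ge0$, $\rho_n:C_0(X)\to B(\ell^2(X^\circ))$ is $\rho_n(f)e_y=\sum_{x\in X^\circ,\,R^{\circ n}(x)=y}f(x)e_x$, and $E_n=\rho_n(C_0(X))$. $\rho_A=\rho_0$, $\rho_E=\rho_1$ and $C^*(\rho)$ is the C*-algebra generated by $E_0\cup E_1$. *)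

theory Defs
  imports "HOL-Analysis.Analysis" "HOL-Computational_Algebra.Polynomial"
begin

section \<open>The Riemann sphere, realised as the unit sphere in R x C (chordal metric)\<close>

type_synonym pt = "real \<times> complex"

definition S2 :: "pt set" where
  "S2 = sphere 0 1"

definition NP :: pt where   \<comment> \<open>north pole = infinity\<close>
  "NP = (1, 0)"

definition stereo_inv :: "complex \<Rightarrow> pt" where
  "stereo_inv w = (((cmod w)^2 - 1) / ((cmod w)^2 + 1),
                   complex_of_real (2 / ((cmod w)^2 + 1)) * w)"

definition stereo :: "pt \<Rightarrow> complex" where
  "stereo P = snd P / complex_of_real (1 - fst P)"

definition ratmap :: "complex poly \<Rightarrow> complex poly \<Rightarrow> pt \<Rightarrow> pt" where
  "ratmap p q P =
     (if P = NP then
        (if degree p > degree q then NP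
         else if degree p = degree q then stereo_inv (lead_coeff p / lead_coeff q)
         else stereo_inv 0)
      else (let w = stereo P in
            if poly q w = 0 then NP else stereo_inv (poly p w / poly q w)))"

definition normal_family :: "pt set \<Rightarrow> (nat \<Rightarrow> pt \<Rightarrow> pt) \<Rightarrow> bool" where
  "normal_family U F \<longleftrightarrow>
     (\<forall>k :: nat \<Rightarrow> nat. \<exists>r g. strict_mono r \<and>
        (\<forall>K. compact K \<and> K \<subseteq> U \<longrightarrow> uniform_limit K (\<lambda>j. F (k (r j))) g sequentially))"

definition fatou :: "(pt \<Rightarrow> pt) \<Rightarrow> pt set" where
  "fatou R = {x \<in> S2. \<exists>U. openin (top_of_set S2) U \<and> x \<in> U \<and> normal_family U (\<lambda>n. R ^^ n)}"

definition julia :: "(pt \<Rightarrow> pt) \<Rightarrow> pt set" where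
  "julia R = S2 - fatou R"

definition fixed_pts :: "(pt \<Rightarrow> pt) \<Rightarrow> pt set \<Rightarrow> pt set" where
  "fixed_pts R X = {x \<in> X. \<exists>n\<ge>1. (R ^^ n) x = x}"

definition branch_pts :: "(pt \<Rightarrow> pt) \<Rightarrow> pt set \<Rightarrow> pt set" where
  "branch_pts R X = {x \<in> X. \<exists>n\<ge>1.
      \<not> (\<exists>U. openin (top_of_set X) U \<and> x \<in> U \<and> inj_on (R ^^ n) U)}"

definition Xcirc :: "(pt \<Rightarrow> pt) \<Rightarrow> pt set \<Rightarrow> pt set" where
  "Xcirc R X = {x \<in> X. \<not> (\<exists>y \<in> fixed_pts R X \<union> branch_pts R X.
                               \<exists>m n. (R ^^ m) x = (R ^^ n) y)}"

definition l2 :: "pt set \<Rightarrow> (pt \<Rightarrow> complex) set" where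
  "l2 X0 = {\<xi>. (\<forall>x. x \<notin> X0 \<longrightarrow> \<xi> x = 0) \<and> (\<lambda>x. (cmod (\<xi> x))^2) summable_on X0}"

definition nrm :: "pt set \<Rightarrow> (pt \<Rightarrow> complex) \<Rightarrow> real" where
  "nrm X0 \<xi> = sqrt (infsum (\<lambda>x. (cmod (\<xi> x))^2) X0)"

definition inprod :: "pt set \<Rightarrow> (pt \<Rightarrow> complex) \<Rightarrow> (pt \<Rightarrow> complex) \<Rightarrow> complex" where
  "inprod X0 \<xi> \<eta> = infsum (\<lambda>x. \<xi> x * cnj (\<eta> x)) X0"

type_synonym op = "(pt \<Rightarrow> complex) \<Rightarrow> (pt \<Rightarrow> complex)"

text \<open>B(l2(X0)): bounded linear operators, normalised to be 0 outside l2(X0).\<close>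
definition bops :: "pt set \<Rightarrow> op set" where
  "bops X0 = {T. (\<forall>\<xi>. \<xi> \<notin> l2 X0 \<longrightarrow> T \<xi> = (\<lambda>x. 0)) \<and>
                 (\<forall>\<xi>\<in>l2 X0. T \<xi> \<in> l2 X0) \<and>
                 (\<forall>\<xi>\<in>l2 X0. \<forall>\<eta>\<in>l2 X0. T (\<lambda>x. \<xi> x + \<eta> x) = (\<lambda>x. T \<xi> x + T \<eta> x)) \<and>
                 (\<forall>c. \<forall>\<xi>\<in>l2 X0. T (\<lambda>x. c * \<xi> x) = (\<lambda>x. c * T \<xi> x)) \<and>
                 (\<exists>C. \<forall>\<xi>\<in>l2 X0. nrm X0 (T \<xi>) \<le> C * nrm X0 \<xi>)}"

definition opnorm :: "pt set \<Rightarrow> op \<Rightarrow> real" where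
  "opnorm X0 T = Sup {nrm X0 (T \<xi>) | \<xi>. \<xi> \<in> l2 X0 \<and> nrm X0 \<xi> \<le> 1}"

definition op_closure :: "pt set \<Rightarrow> op set \<Rightarrow> op set" where
  "op_closure X0 S = {T \<in> bops X0. \<forall>\<epsilon>>0. \<exists>A\<in>S. opnorm X0 (\<lambda>\<xi> x. T \<xi> x - A \<xi> x) < \<epsilon>}"

definition is_adjoint :: "pt set \<Rightarrow> op \<Rightarrow> op \<Rightarrow> bool" where
  "is_adjoint X0 T S \<longleftrightarrow>
     (\<forall>\<xi>\<in>l2 X0. \<forall>\<eta>\<in>l2 X0. inprod X0 (T \<xi>) \<eta> = inprod X0 \<xi> (S \<eta>))"

definition cstar_gen :: "pt set \<Rightarrow> op set \<Rightarrow> op set" where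
  "cstar_gen X0 G = \<Inter>{A. A \<subseteq> bops X0 \<and> G \<subseteq> A \<and>
       (\<forall>T\<in>A. \<forall>S\<in>A. (\<lambda>\<xi> x. T \<xi> x + S \<xi> x) \<in> A) \<and>
       (\<forall>c. \<forall>T\<in>A. (\<lambda>\<xi> x. c * T \<xi> x) \<in> A) \<and>
       (\<forall>T\<in>A. \<forall>S\<in>A. T \<circ> S \<in> A) \<and>
       (\<forall>T\<in>A. \<exists>S\<in>A. is_adjoint X0 T S) \<and>
       op_closure X0 A \<subseteq> A}"

definition C0 :: "pt set \<Rightarrow> (pt \<Rightarrow> complex) set" where
  "C0 X = {f. continuous_on X f \<and>
              (\<forall>\<epsilon>>0. \<exists>K. compact K \<and> K \<subseteq> X \<and> (\<forall>x\<in>X - K. cmod (f x) < \<epsilon>))}"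

text \<open>rho_n(f) e_y = sum over x in X0 with R^n x = y of f(x) e_x, i.e.
  (rho_n(f) xi)(x) = f(x) xi(R^n x) for x in X0.\<close>
definition rho :: "(pt \<Rightarrow> pt) \<Rightarrow> pt set \<Rightarrow> nat \<Rightarrow> (pt \<Rightarrow> complex) \<Rightarrow> op" where
  "rho R X n f = (\<lambda>\<xi>. if \<xi> \<in> l2 (Xcirc R X)
       then (\<lambda>x. if x \<in> Xcirc R X then f x * \<xi> ((R ^^ n) x) else 0)
       else (\<lambda>x. 0))"

definition Eset :: "(pt \<Rightarrow> pt) \<Rightarrow> pt set \<Rightarrow> nat \<Rightarrow> op set" where
  "Eset R X n = rho R X n ` C0 X"

definition prodset :: "op set \<Rightarrow> op set \<Rightarrow> op set" where
  "prodset A B = {\<alpha> \<circ> \<beta> | \<alpha> \<beta>. \<alpha> \<in> A \<and> \<beta> \<in> B}"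

definition Cstar_rho :: "(pt \<Rightarrow> pt) \<Rightarrow> pt set \<Rightarrow> op set" where
  "Cstar_rho R X = cstar_gen (Xcirc R X) (Eset R X 0 \<union> Eset R X 1)"

end

theory Submission
  imports Defs "HOL-Complex_Analysis.Complex_Analysis"
begin

text \<open>
  The operators \<open>\<rho>\<^sub>n(f)\<close> are weighted composition operators
  \<open>(\<rho>\<^sub>n(f)\<xi>)(x) = f(x) \<xi>(R\<^sup>n x)\<close> on \<open>\<ell>\<^sup>2(X\<degree>)\<close>, and
  \<open>\<rho>\<^sub>m(f) \<rho>\<^sub>n(g) = \<rho>\<^sub>m\<^sub>+\<^sub>n(f \<cdot> g\<circ>R\<^sup>m)\<close>.  Since the fibres of \<open>R\<^sup>n\<close> have at most
  \<open>(d+1)\<^sup>n\<close> points (\<open>d\<close> the degree of \<open>R\<close>), \<open>\<parallel>\<rho>\<^sub>n(f)\<parallel> \<le> (d+1)\<^sup>n\<^sup>/\<^sup>2 \<parallel>f\<parallel>\<^sub>\<infinity>\<close>, while testing against the basis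
  vector \<open>e\<^bsub>R\<^sup>n x\<^esub>\<close> recovers \<open>f(x)\<close>, so \<open>\<parallel>f\<parallel>\<^sub>\<infinity> \<le> \<parallel>\<rho>\<^sub>n(f)\<parallel>\<close> on \<open>X\<degree>\<close>.  Hence a
  norm limit of operators \<open>\<rho>\<^sub>m\<^sub>+\<^sub>n(h\<^sub>k)\<close> has weights converging uniformly on
  \<open>X\<degree>\<close>; clipping the increments of a fast-converging sequence keeps them
  in \<open>C\<^sub>0(X)\<close>, so the limit weight extends to a function of \<open>C\<^sub>0(X)\<close>.
  Conversely \<open>\<rho>\<^sub>m\<^sub>+\<^sub>n(h)\<close> is approximated by \<open>\<rho>\<^sub>m(h) \<rho>\<^sub>n(g)\<close> where \<open>g \<in> C\<^sub>0(X)\<close> is a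
  cut-off equal to 1 on \<open>R\<^sup>m(K)\<close> and \<open>|h| < \<epsilon>\<close> off the compact set \<open>K\<close>; such
  cut-offs exist because \<open>X\<close> is compact or open in the sphere.  Both
  directions need that \<open>X\<close> and \<open>X\<degree>\<close> are forward invariant, which for the
  Fatou and Julia sets uses that \<open>R\<close> is continuous and open.  Finally
  \<open>E\<^sub>n\<^sub>+\<^sub>1 = closure(E\<^sub>n E\<^sub>1)\<close> puts every \<open>E\<^sub>n\<close> into \<open>C\<^sup>*(\<rho>)\<close> by induction.
\<close>

section \<open>Stereographic charts\<close>

definition SP :: pt where
  "SP = (-1, 0)"

definition flip :: "pt \<Rightarrow> pt" where
  "flip P = (- fst P, cnj (snd P))"

lemma mem_S2_iff: "P \<in> S2 \<longleftrightarrow> (fst P)^2 + (cmod (snd P))^2 = 1"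
proof -
  have "P \<in> S2 \<longleftrightarrow> norm P = 1" by (simp add: S2_def)
  also have "\<dots> \<longleftrightarrow> (norm P)^2 = 1" using norm_ge_zero[of P] by (smt (verit) power2_eq_1_iff)
  also have "(norm P)^2 = (fst P)^2 + (cmod (snd P))^2"
    by (cases P) (simp add: norm_Pair)
  finally show ?thesis .
qed

lemma NP_in_S2: "NP \<in> S2" by (simp add: mem_S2_iff NP_def)
lemma NP_neq_SP: "NP \<noteq> SP" by (simp add: NP_def SP_def)

lemma stereo_inv_in_S2: "stereo_inv w \<in> S2"
proof -
  define s where "s = (cmod w)^2"
  have s0: "s \<ge> 0" by (simp add: s_def)
  have "(cmod (complex_of_real (2 / (s + 1)) * w))^2 = (2/(s+1))^2 * s"
    unfolding s_def by (simp only: norm_mult norm_of_real power_mult_distrib power2_abs)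
  moreover have "((s-1)/(s+1))^2 + (2/(s+1))^2 * s = ((s - 1)^2 + 4 * s) / ((s+1)^2)"
    by (simp add: power_divide add_divide_distrib)
  moreover have "(s-1)^2 + 4 * s = (s+1)^2" by algebra
  ultimately show ?thesis
    using s0 by (simp add: mem_S2_iff stereo_inv_def s_def[symmetric])
qed

lemma stereo_inv_neq_NP: "stereo_inv w \<noteq> NP"
  by (simp add: stereo_inv_def NP_def divide_eq_1_iff)

lemma stereo_inv_0: "stereo_inv 0 = SP"
  by (simp add: stereo_inv_def SP_def)

lemma stereo_stereo_inv [simp]: "stereo (stereo_inv w) = w"
proof -
  define s where "s = (cmod w)^2"
  have s0: "s + 1 > 0" by (simp add: s_def add_nonneg_pos)
  have h: "1 - (s - 1) / (s + 1) = 2 / (s + 1)" using s0 by (simp add: field_simps)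
  have c: "2 / (s+1) \<noteq> 0" using s0 by simp
  show ?thesis unfolding stereo_def stereo_inv_def fst_conv snd_conv s_def[symmetric] h
    using c by (metis nonzero_mult_div_cancel_left of_real_eq_0_iff)
qed

lemma stereo_inv_stereo:
  assumes "P \<in> S2" "P \<noteq> NP" shows "stereo_inv (stereo P) = P"
proof -
  obtain a z where P: "P = (a, z)" by (cases P)
  have e: "a^2 + (cmod z)^2 = 1" using assms(1) by (simp add: mem_S2_iff P)
  have "a \<noteq> 1"
    using assms(2) e by (auto simp: P NP_def)
  moreover have "a \<le> 1"
  proof (rule ccontr)
    assume "\<not> a \<le> 1" then have "1 < a^2" by (simp add: one_less_power)
    then show False using e by (smt (verit) zero_le_power2)
  qed
  ultimately have pos: "1 - a > 0" by simp
  let ?w = "z / complex_of_real (1 - a)"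
  have "(cmod ?w)^2 = (cmod z)^2 / (1 - a)^2"
    using pos by (simp add: norm_divide power_divide del: of_real_diff)
  also have "\<dots> = ((1 + a) * (1 - a)) / ((1 - a) * (1 - a))"
    using e by (simp add: power2_eq_square algebra_simps)
  also have "\<dots> = (1 + a) / (1 - a)" using pos by simp
  finally have nw: "(cmod ?w)^2 = (1 + a) / (1 - a)" .
  have n1: "(cmod ?w)^2 + 1 = 2 / (1 - a)" and n2: "(cmod ?w)^2 - 1 = 2 * a / (1 - a)"
    using nw pos by (simp_all add: field_simps)
  have "((cmod ?w)^2 - 1) / ((cmod ?w)^2 + 1) = a"
    unfolding n1 n2 using pos by simp
  moreover have "complex_of_real (2 / ((cmod ?w)^2 + 1)) * ?w = z"
    unfolding n1 using pos by simp
  ultimately show ?thesis by (simp add: stereo_inv_def stereo_def P)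
qed

lemma flip_flip [simp]: "flip (flip P) = P" by (simp add: flip_def)
lemma flip_in_S2: "P \<in> S2 \<Longrightarrow> flip P \<in> S2" by (simp add: mem_S2_iff flip_def)
lemma flip_NP: "flip NP = SP" and flip_SP: "flip SP = NP" by (simp_all add: flip_def NP_def SP_def)

lemma flip_eq_NP_iff: "flip P = NP \<longleftrightarrow> P = SP"
  by (metis flip_flip flip_NP flip_SP)

lemma stereo_inv_inverse:
  assumes "w \<noteq> 0" shows "stereo_inv (1 / w) = flip (stereo_inv w)"
proof -
  define s where "s = (cmod w)^2"
  have s: "s > 0" using assms by (simp add: s_def)
  have n: "(cmod (1 / w))^2 = 1 / s" by (simp add: s_def norm_divide power_divide)
  have "(1 / s - 1) / (1 / s + 1) = (1 - s) / (1 + s)"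
    using s by (simp add: divide_simps)
  then have first: "(1 / s - 1) / (1 / s + 1) = - ((s - 1) / (s + 1))"
    by (simp add: minus_divide_left add.commute)
  have "complex_of_real s = w * cnj w"
    unfolding s_def using complex_norm_square[of w] by simp
  then have "complex_of_real s / w = cnj w"
    using assms by (simp add: field_simps)
  moreover have "2 / (1 / s + 1) = 2 / (s + 1) * s" using s by (simp add: field_simps)
  ultimately have "complex_of_real (2 / (1 / s + 1)) * (1 / w)
             = complex_of_real (2 / (s + 1)) * cnj w"
    by (metis (no_types, lifting) mult.assoc of_real_mult times_divide_eq_right mult.right_neutral)
  then show ?thesis
    using first by (simp add: stereo_inv_def flip_def n s_def[symmetric])
qed

lemma continuous_on_stereo_inv: "continuous_on UNIV stereo_inv"
proof -
  have "(cmod x)^2 + 1 \<noteq> 0" for x by (smt (verit) zero_le_power2)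
  then show ?thesis unfolding stereo_inv_def by (intro continuous_intros) auto
qed

lemma continuous_on_flip: "continuous_on A flip"
  unfolding flip_def by (intro continuous_intros)

lemma isCont_flip: "isCont flip P"
  using continuous_on_flip[of UNIV] continuous_on_eq_continuous_at by blast

lemma continuous_on_stereo: "continuous_on (S2 - {NP}) stereo"
proof -
  have "1 - fst P \<noteq> 0" if "P \<in> S2 - {NP}" for P
    using that by (cases P) (auto simp: mem_S2_iff NP_def)
  then show ?thesis unfolding stereo_def by (intro continuous_intros) auto
qed

lemma stereo_inv_image: "stereo_inv ` Q = {P \<in> S2 - {NP}. stereo P \<in> Q}"
proof
  show "stereo_inv ` Q \<subseteq> {P \<in> S2 - {NP}. stereo P \<in> Q}"
    using stereo_inv_in_S2 stereo_inv_neq_NP[symmetric] by auto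
  show "{P \<in> S2 - {NP}. stereo P \<in> Q} \<subseteq> stereo_inv ` Q"
    using stereo_inv_stereo by (metis (mono_tags, lifting) DiffE insertCI mem_Collect_eq rev_image_eqI subsetI)
qed

lemma openin_stereo_inv_image:
  assumes "open Q" shows "openin (top_of_set S2) (stereo_inv ` Q)"
proof -
  have "openin (top_of_set (S2 - {NP})) ((S2 - {NP}) \<inter> stereo -` Q)"
    by (rule continuous_openin_preimage_gen[OF continuous_on_stereo assms])
  moreover have "(S2 - {NP}) \<inter> stereo -` Q = stereo_inv ` Q"
    unfolding stereo_inv_image by auto
  ultimately show ?thesis
    using openin_trans openin_delete[OF openin_subtopology_self] by metis
qed

lemma open_stereo_inv_preimage:
  assumes "openin (top_of_set S2) V" shows "open (stereo_inv -` V)"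
proof -
  obtain T where T: "open T" "V = S2 \<inter> T" using assms openin_open by metis
  have "stereo_inv -` V = stereo_inv -` T" using T stereo_inv_in_S2 by auto
  moreover have "open (stereo_inv -` T)"
    using continuous_open_vimage[OF T(1)] continuous_on_stereo_inv continuous_on_eq_continuous_at
    by blast
  ultimately show ?thesis by simp
qed

lemma openin_flip_image:
  assumes "openin (top_of_set S2) V" shows "openin (top_of_set S2) (flip ` V)"
proof -
  obtain T where T: "open T" "V = S2 \<inter> T" using assms openin_open by metis
  have "flip ` V = S2 \<inter> flip -` T"
  proof (intro equalityI subsetI)
    fix P assume "P \<in> flip ` V"
    then show "P \<in> S2 \<inter> flip -` T" using T flip_in_S2 by auto
  next
    fix P assume "P \<in> S2 \<inter> flip -` T"
    then have "flip P \<in> V" using T flip_in_S2 by auto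
    then show "P \<in> flip ` V" using image_eqI[of P flip "flip P"] by simp
  qed
  then show ?thesis using continuous_openin_preimage_gen[OF continuous_on_flip T(1)] by simp
qed


definition quot_pt :: "complex poly \<Rightarrow> complex poly \<Rightarrow> complex \<Rightarrow> pt" where
  "quot_pt a b w = (if poly b w = 0 then NP else stereo_inv (poly a w / poly b w))"

lemma quot_pt_in_S2: "quot_pt a b w \<in> S2"
  by (simp add: quot_pt_def NP_in_S2 stereo_inv_in_S2)

lemma quot_pt_eq_flip:
  assumes "poly a w \<noteq> 0" shows "quot_pt a b w = flip (stereo_inv (poly b w / poly a w))"
proof (cases "poly b w = 0")
  case True then show ?thesis by (simp add: quot_pt_def stereo_inv_0 flip_SP)
next
  case False
  have "poly a w / poly b w = 1 / (poly b w / poly a w)" by simp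
  then show ?thesis using False assms stereo_inv_inverse[of "poly b w / poly a w"]
    by (simp add: quot_pt_def)
qed

lemma eventually_poly_nonzero:
  fixes b :: "complex poly"
  assumes "poly b w0 \<noteq> 0" shows "eventually (\<lambda>w. poly b w \<noteq> 0) (nhds w0)"
proof (rule tendsto_imp_eventually_ne[OF _ assms])
  show "(poly b \<longlongrightarrow> poly b w0) (nhds w0)"
    using poly_isCont[of w0 b] by (simp add: isCont_def tendsto_at_iff_tendsto_nhds)
qed

lemma isCont_stereo_inv_quot:
  fixes a b :: "complex poly"
  assumes "poly b w0 \<noteq> 0" shows "isCont (\<lambda>w. stereo_inv (poly a w / poly b w)) w0"
proof (rule isCont_o2[where f = "\<lambda>w. poly a w / poly b w"])
  show "isCont (\<lambda>w. poly a w / poly b w) w0" using assms by (intro continuous_intros) auto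
  show "isCont stereo_inv (poly a w0 / poly b w0)"
    using continuous_on_stereo_inv continuous_on_eq_continuous_at by blast
qed

lemma isCont_quot_pt:
  assumes "\<not> (poly a w0 = 0 \<and> poly b w0 = 0)" shows "isCont (quot_pt a b) w0"
proof (cases "poly b w0 = 0")
  case False
  have "eventually (\<lambda>w. quot_pt a b w = stereo_inv (poly a w / poly b w)) (nhds w0)"
    using eventually_poly_nonzero[OF False] by eventually_elim (simp add: quot_pt_def)
  then show ?thesis using isCont_stereo_inv_quot[OF False] by (subst isCont_cong)
next
  case True
  then have a0: "poly a w0 \<noteq> 0" using assms by auto
  have "eventually (\<lambda>w. quot_pt a b w = flip (stereo_inv (poly b w / poly a w))) (nhds w0)"
    using eventually_poly_nonzero[OF a0] by eventually_elim (simp add: quot_pt_eq_flip)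
  moreover have "isCont (\<lambda>w. flip (stereo_inv (poly b w / poly a w))) w0"
    by (rule isCont_o2[OF isCont_stereo_inv_quot[OF a0] isCont_flip])
  ultimately show ?thesis by (subst isCont_cong)
qed

lemma poly_eq_0_if_vanishes_on_ball:
  fixes f :: "complex poly"
  assumes "e > 0" "\<forall>w\<in>ball w0 e. poly f w = 0" shows "f = 0"
proof (rule ccontr)
  assume "f \<noteq> 0"
  then have "finite {x. poly f x = 0}" by (rule poly_roots_finite)
  moreover have "ball w0 e \<subseteq> {x. poly f x = 0}" using assms by auto
  moreover have "infinite (UNIV \<inter> ball w0 e)"
    using islimpt_eq_infinite_ball[of w0 UNIV] islimpt_UNIV assms(1) by blast
  ultimately show False by (metis finite_subset inf_top_left)
qed

lemma poly_quot_not_constant_on_ball: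
  fixes a b :: "complex poly"
  assumes "\<forall>c. a \<noteq> smult c b" and "e > 0" and "\<forall>w\<in>ball w0 e. poly b w \<noteq> 0"
  shows "\<not> (\<lambda>w. poly a w / poly b w) constant_on ball w0 e"
proof
  assume "(\<lambda>w. poly a w / poly b w) constant_on ball w0 e"
  then obtain c where c: "\<forall>w\<in>ball w0 e. poly a w / poly b w = c" unfolding constant_on_def by blast
  have "\<forall>w\<in>ball w0 e. poly (a - smult c b) w = 0"
    using c assms(3) by (auto simp: field_simps)
  then have "a - smult c b = 0" using poly_eq_0_if_vanishes_on_ball assms(2) by blast
  then show False using assms(1) by simp
qed

lemma poly_quot_locally_open:
  fixes a b :: "complex poly"
  assumes nc: "\<forall>c. a \<noteq> smult c b" and b0: "poly b w0 \<noteq> 0" and Q: "open Q" "w0 \<in> Q"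
  obtains N where "w0 \<in> N" "N \<subseteq> Q" "\<forall>w\<in>N. poly b w \<noteq> 0" "open ((\<lambda>w. poly a w / poly b w) ` N)"
proof -
  obtain e where e: "e > 0" "\<forall>w\<in>ball w0 e. poly b w \<noteq> 0"
    using continuous_at_avoid[OF poly_isCont b0] by (auto simp: mem_ball)
  define N where "N = Q \<inter> ball w0 e"
  have N: "open N" "w0 \<in> N" "N \<subseteq> Q" "N \<subseteq> ball w0 e" using Q e by (auto simp: N_def)
  have "(\<lambda>w. poly a w / poly b w) holomorphic_on ball w0 e"
    using e by (intro holomorphic_intros) auto
  then have "open ((\<lambda>w. poly a w / poly b w) ` N)"
    by (rule open_mapping_thm[OF _ open_ball connected_ball N(1) N(4) poly_quot_not_constant_on_ball[OF nc e]])
  then show ?thesis using that N e(2) by blast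
qed

text \<open>Local openness of \<open>quot_pt\<close> is the open mapping theorem in whichever chart
  avoids the pole.\<close>
lemma quot_pt_locally_open:
  fixes a b :: "complex poly"
  assumes nc1: "\<forall>c. a \<noteq> smult c b" and nc2: "\<forall>c. b \<noteq> smult c a"
    and nz: "\<not> (poly a w0 = 0 \<and> poly b w0 = 0)" and Q: "open Q" "w0 \<in> Q"
  shows "\<exists>N. w0 \<in> N \<and> N \<subseteq> Q \<and> openin (top_of_set S2) (quot_pt a b ` N)"
proof (cases "poly b w0 = 0")
  case False
  then obtain N where N: "w0 \<in> N" "N \<subseteq> Q" "\<forall>w\<in>N. poly b w \<noteq> 0"
    and op: "open ((\<lambda>w. poly a w / poly b w) ` N)"
    using poly_quot_locally_open[OF nc1 _ Q] by blast
  have "quot_pt a b ` N = stereo_inv ` ((\<lambda>w. poly a w / poly b w) ` N)"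
    using N(3) by (auto simp: quot_pt_def image_image intro!: image_cong)
  then have "openin (top_of_set S2) (quot_pt a b ` N)"
    using openin_stereo_inv_image[OF op] by simp
  then show ?thesis using N by blast
next
  case True
  then have "poly a w0 \<noteq> 0" using nz by auto
  then obtain N where N: "w0 \<in> N" "N \<subseteq> Q" "\<forall>w\<in>N. poly a w \<noteq> 0"
    and op: "open ((\<lambda>w. poly b w / poly a w) ` N)"
    using poly_quot_locally_open[OF nc2 _ Q] by blast
  have "quot_pt a b ` N = flip ` stereo_inv ` ((\<lambda>w. poly b w / poly a w) ` N)"
    using N(3) by (auto simp: quot_pt_eq_flip image_image intro!: image_cong)
  then have "openin (top_of_set S2) (quot_pt a b ` N)"
    using openin_flip_image[OF openin_stereo_inv_image[OF op]] by simp
  then show ?thesis using N by blast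
qed

lemma degree_eq_0_if_unit: "is_unit (u::complex poly) \<Longrightarrow> degree u = 0"
  by (metis is_unit_iff_degree not_is_unit_0)

lemma coprime_no_common_root:
  fixes f g :: "complex poly"
  assumes "coprime f g" shows "\<not> (poly f w = 0 \<and> poly g w = 0)"
proof
  assume "poly f w = 0 \<and> poly g w = 0"
  then have "[:-w, 1:] dvd f" "[:-w, 1:] dvd g" by (simp_all add: poly_eq_0_iff_dvd)
  then have "is_unit [:-w, 1:]" by (rule coprime_common_divisor[OF assms])
  then have "degree [:-w, 1:] = 0" by (rule degree_eq_0_if_unit)
  then show False by simp
qed

lemma coprime_not_smult:
  fixes f g :: "complex poly"
  assumes "coprime f g" "0 < max (degree f) (degree g)" shows "f \<noteq> smult c g"
proof
  assume h: "f = smult c g"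
  then have "g dvd f" using dvd_smult[OF dvd_refl] by simp
  then have "is_unit g" by (rule coprime_common_divisor[OF assms(1) _ dvd_refl])
  then have "degree g = 0" by (rule degree_eq_0_if_unit)
  moreover have "degree f \<le> degree g" using h degree_smult_le by metis
  ultimately show False using assms(2) by simp
qed

definition reflect_deg :: "nat \<Rightarrow> complex poly \<Rightarrow> complex poly" where
  "reflect_deg d f = monom 1 (d - degree f) * reflect_poly f"

lemma poly_reflect_deg:
  assumes "degree f \<le> d" "u \<noteq> 0"
  shows "poly (reflect_deg d f) u = u ^ d * poly f (1 / u)"
proof -
  have "poly (reflect_deg d f) u = u ^ (d - degree f) * (u ^ degree f * poly f (inverse u))"
    by (simp only: reflect_deg_def poly_mult poly_monom mult_1 poly_reflect_poly_nz[OF assms(2)])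
  also have "\<dots> = u ^ (d - degree f + degree f) * poly f (1 / u)"
    by (simp add: power_add inverse_eq_divide)
  finally show ?thesis using assms(1) by simp
qed

lemma poly_reflect_deg_0:
  assumes "degree f \<le> d"
  shows "poly (reflect_deg d f) 0 = (if degree f = d then lead_coeff f else 0)"
  using assms by (cases "f = 0") (auto simp: reflect_deg_def poly_monom)

lemma reflect_deg_eq_smult_imp:
  assumes "degree f \<le> d" "degree g \<le> d" "reflect_deg d f = smult c (reflect_deg d g)"
  shows "f = smult c g"
proof -
  have "poly (f - smult c g) w = 0" if "w \<noteq> 0" for w
  proof -
    have "poly (reflect_deg d f) (1/w) = c * poly (reflect_deg d g) (1/w)" using assms(3) by simp
    then show ?thesis using that assms(1,2) by (simp add: poly_reflect_deg)
  qed
  then have "- {0} \<subseteq> {w. poly (f - smult c g) w = 0}" by blast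
  moreover have "infinite (- {0::complex})" by (simp add: infinite_UNIV_char_0)
  ultimately have "f - smult c g = 0"
    using poly_roots_finite[of "f - smult c g"] finite_subset by blast
  then show ?thesis by simp
qed

section \<open>The rational map on the sphere\<close>

lemma funpow_fibre_bound:
  assumes maps: "\<forall>x\<in>S. f x \<in> S"
    and fib: "\<forall>y. finite {x\<in>S. f x = y} \<and> card {x\<in>S. f x = y} \<le> D"
  shows "finite {x\<in>S. (f ^^ n) x = y} \<and> card {x\<in>S. (f ^^ n) x = y} \<le> D ^ n"
proof (induction n arbitrary: y)
  case 0
  have "{x\<in>S. (f ^^ 0) x = y} \<subseteq> {y}" by auto
  then show ?case using card_mono[of "{y}"] finite_subset[of _ "{y}"] by fastforce
next
  case (Suc n)
  let ?U = "\<Union>z\<in>{z\<in>S. f z = y}. {x\<in>S. (f ^^ n) x = z}"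
  have "(f ^^ n) x \<in> S" if "x \<in> S" for x using that maps by (induction n) auto
  then have sub: "{x\<in>S. (f ^^ Suc n) x = y} \<subseteq> ?U" by auto
  have f1: "finite {z\<in>S. f z = y}" using fib by blast
  have fin: "finite ?U" using f1 Suc.IH by blast
  have "card ?U \<le> (\<Sum>z\<in>{z\<in>S. f z = y}. card {x\<in>S. (f ^^ n) x = z})"
    by (rule card_UN_le[OF f1])
  also have "\<dots> \<le> (\<Sum>z\<in>{z\<in>S. f z = y}. D ^ n)"
    by (rule sum_mono) (use Suc.IH in blast)
  also have "\<dots> \<le> D * D ^ n" using fib by (simp add: mult_right_mono)
  finally show ?case using card_mono[OF fin sub] finite_subset[OF sub fin] by simp
qed

locale rational_map =
  fixes p q :: "complex poly"
  assumes coprime: "coprime p q" and degree_ge_2: "max (degree p) (degree q) \<ge> 2"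
begin

abbreviation "R \<equiv> ratmap p q"

definition "d = max (degree p) (degree q)"

text \<open>The numerator and denominator of \<open>R\<close> in the chart at infinity \<open>u = 1/w\<close>.\<close>
definition "p_refl = reflect_deg d p"
definition "q_refl = reflect_deg d q"

lemma degree_le_d: "degree p \<le> d" "degree q \<le> d"
  by (simp_all add: d_def)

lemma p_nonzero: "p \<noteq> 0" and q_nonzero: "q \<noteq> 0"
  using coprime degree_ge_2 degree_eq_0_if_unit by (auto simp: coprime_commute)

lemma no_common_root: "\<not> (poly p w = 0 \<and> poly q w = 0)"
  by (rule coprime_no_common_root[OF coprime])

lemma p_not_smult_q: "\<forall>c. p \<noteq> smult c q"
  using coprime_not_smult[OF coprime] degree_ge_2 by simp

lemma q_not_smult_p: "\<forall>c. q \<noteq> smult c p"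
  using coprime_not_smult[of q p] coprime degree_ge_2 by (simp add: coprime_commute max.commute)

lemma p_refl_not_smult_q_refl: "\<forall>c. p_refl \<noteq> smult c q_refl"
  using reflect_deg_eq_smult_imp[OF degree_le_d] p_not_smult_q by (auto simp: p_refl_def q_refl_def)

lemma q_refl_not_smult_p_refl: "\<forall>c. q_refl \<noteq> smult c p_refl"
  using reflect_deg_eq_smult_imp[OF degree_le_d(2,1)] q_not_smult_p by (auto simp: p_refl_def q_refl_def)

lemma poly_p_refl: "u \<noteq> 0 \<Longrightarrow> poly p_refl u = u ^ d * poly p (1 / u)"
  and poly_q_refl: "u \<noteq> 0 \<Longrightarrow> poly q_refl u = u ^ d * poly q (1 / u)"
  by (simp_all add: p_refl_def q_refl_def poly_reflect_deg degree_le_d)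

lemma poly_p_refl_0: "poly p_refl 0 = (if degree p = d then lead_coeff p else 0)"
  and poly_q_refl_0: "poly q_refl 0 = (if degree q = d then lead_coeff q else 0)"
  by (simp_all add: p_refl_def q_refl_def poly_reflect_deg_0 degree_le_d)

lemma no_common_root_refl: "\<not> (poly p_refl u = 0 \<and> poly q_refl u = 0)"
proof (cases "u = 0")
  case True
  have "degree p = d \<or> degree q = d" by (auto simp: d_def max_def)
  then have "poly p_refl 0 = lead_coeff p \<or> poly q_refl 0 = lead_coeff q"
    by (auto simp: poly_p_refl_0 poly_q_refl_0)
  then show ?thesis using True p_nonzero q_nonzero by auto
next
  case False
  then show ?thesis using poly_p_refl poly_q_refl no_common_root[of "1/u"] by simp
qed

lemma ratmap_eq_quot_pt: "P \<noteq> NP \<Longrightarrow> R P = quot_pt p q (stereo P)"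
  by (simp add: ratmap_def quot_pt_def Let_def)

lemma ratmap_NP: "R NP = quot_pt p_refl q_refl 0"
proof -
  consider "degree p > degree q" | "degree p = degree q" | "degree p < degree q" by linarith
  then show ?thesis
    by cases (use q_nonzero in \<open>simp_all add: ratmap_def quot_pt_def poly_p_refl_0 poly_q_refl_0 d_def\<close>)
qed

lemma ratmap_eq_quot_pt_flip:
  assumes P: "P \<in> S2" "P \<noteq> SP" shows "R P = quot_pt p_refl q_refl (stereo (flip P))"
proof -
  define u where "u = stereo (flip P)"
  have "flip P \<noteq> NP" using P(2) by (auto simp: flip_eq_NP_iff)
  then have su: "stereo_inv u = flip P" using stereo_inv_stereo flip_in_S2 P(1) u_def by simp
  show ?thesis
  proof (cases "u = 0")
    case True
    then have "P = NP" using su stereo_inv_0 by (metis flip_flip flip_SP)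
    then show ?thesis using True ratmap_NP u_def by simp
  next
    case False
    have Pu: "P = stereo_inv (1 / u)" using su stereo_inv_inverse[OF False] by simp
    then have "R P = quot_pt p q (1 / u)" using ratmap_eq_quot_pt stereo_inv_neq_NP by simp
    also have "\<dots> = quot_pt p_refl q_refl u"
      using False by (simp add: quot_pt_def poly_p_refl poly_q_refl)
    finally show ?thesis by (simp add: u_def)
  qed
qed

lemma ratmap_in_S2: "R P \<in> S2"
  by (cases "P = NP") (simp_all add: ratmap_NP quot_pt_in_S2 ratmap_eq_quot_pt)

lemma funpow_ratmap_in_S2: "x \<in> S2 \<Longrightarrow> (R ^^ n) x \<in> S2"
  by (induction n) (auto simp: ratmap_in_S2)

lemma continuous_on_ratmap: "continuous_on S2 R"
proof -
  have pq: "continuous_on UNIV (quot_pt p q)"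
    using isCont_quot_pt no_common_root by (blast intro: continuous_at_imp_continuous_on)
  have pq_refl: "continuous_on UNIV (quot_pt p_refl q_refl)"
    using isCont_quot_pt no_common_root_refl by (blast intro: continuous_at_imp_continuous_on)
  have "flip ` (S2 - {SP}) \<subseteq> S2 - {NP}"
    using flip_in_S2 flip_eq_NP_iff by (simp add: image_subset_iff)
  then have "continuous_on (S2 - {SP}) (\<lambda>P. stereo (flip P))"
    by (rule continuous_on_compose2[OF continuous_on_stereo continuous_on_flip])
  then have c2: "continuous_on (S2 - {SP}) (\<lambda>P. quot_pt p_refl q_refl (stereo (flip P)))"
    by (rule continuous_on_compose2[OF pq_refl]) simp
  have c1: "continuous_on (S2 - {NP}) (\<lambda>P. quot_pt p q (stereo P))"
    by (rule continuous_on_compose2[OF pq continuous_on_stereo]) simp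
  have U: "(S2 - {NP}) \<union> (S2 - {SP}) = S2" using NP_neq_SP by auto
  have "continuous_on ((S2 - {NP}) \<union> (S2 - {SP})) R"
  proof (rule continuous_on_Un_local_open)
    show "continuous_on (S2 - {NP}) R"
      using c1 by (rule continuous_on_eq) (simp add: ratmap_eq_quot_pt)
    show "continuous_on (S2 - {SP}) R"
      using c2 by (rule continuous_on_eq) (simp add: ratmap_eq_quot_pt_flip)
  qed (unfold U; intro openin_delete; simp)+
  then show ?thesis by (simp only: U)
qed

lemma continuous_on_funpow_ratmap: "continuous_on S2 (R ^^ n)"
proof (induction n)
  case (Suc n)
  have "continuous_on S2 (\<lambda>x. R ((R ^^ n) x))"
    by (rule continuous_on_compose2[OF continuous_on_ratmap Suc]) (auto simp: funpow_ratmap_in_S2)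
  then show ?case by (simp add: o_def)
qed (simp add: continuous_on_id)

lemma openin_ratmap_image:
  assumes V: "openin (top_of_set S2) V" shows "openin (top_of_set S2) (R ` V)"
proof (subst openin_subopen, intro ballI)
  fix y assume "y \<in> R ` V"
  then obtain x where x: "x \<in> V" "y = R x" by blast
  have xS: "x \<in> S2" using x V openin_imp_subset by auto
  show "\<exists>T. openin (top_of_set S2) T \<and> y \<in> T \<and> T \<subseteq> R ` V"
  proof (cases "x = NP")
    case False
    have w0: "stereo x \<in> stereo_inv -` V" using stereo_inv_stereo[OF xS False] x by simp
    obtain N where N: "stereo x \<in> N" "N \<subseteq> stereo_inv -` V" "openin (top_of_set S2) (quot_pt p q ` N)"
      using quot_pt_locally_open[OF p_not_smult_q q_not_smult_p no_common_root
          open_stereo_inv_preimage[OF V] w0] by blast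
    have "quot_pt p q w \<in> R ` V" if "w \<in> N" for w
    proof (rule image_eqI)
      show "stereo_inv w \<in> V" using that N(2) by auto
      show "quot_pt p q w = R (stereo_inv w)"
        using ratmap_eq_quot_pt[OF stereo_inv_neq_NP] by simp
    qed
    moreover have "y \<in> quot_pt p q ` N" using N(1) x ratmap_eq_quot_pt[OF False] by simp
    ultimately show ?thesis using N(3) by blast
  next
    case True
    have w0: "0 \<in> stereo_inv -` flip ` V"
      using True x image_eqI[of SP flip NP V] by (simp add: stereo_inv_0 flip_NP)
    obtain N where N: "0 \<in> N" "N \<subseteq> stereo_inv -` flip ` V"
      "openin (top_of_set S2) (quot_pt p_refl q_refl ` N)"
      using quot_pt_locally_open[OF p_refl_not_smult_q_refl q_refl_not_smult_p_refl no_common_root_refl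
          open_stereo_inv_preimage[OF openin_flip_image[OF V]] w0] by blast
    have "quot_pt p_refl q_refl w \<in> R ` V" if "w \<in> N" for w
    proof (rule image_eqI)
      show "flip (stereo_inv w) \<in> V" using that N(2) by (auto simp: image_iff)
      have "flip (stereo_inv w) \<noteq> SP"
        using stereo_inv_neq_NP flip_eq_NP_iff by (metis flip_flip)
      then show "quot_pt p_refl q_refl w = R (flip (stereo_inv w))"
        using ratmap_eq_quot_pt_flip[OF flip_in_S2[OF stereo_inv_in_S2]] by simp
    qed
    moreover have "y \<in> quot_pt p_refl q_refl ` N" using N(1) x True ratmap_NP by simp
    ultimately show ?thesis using N(3) by blast
  qed
qed

definition fibre_poly :: "pt \<Rightarrow> complex poly" where
  "fibre_poly y = (if y = NP then q else p - smult (stereo y) q)"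

lemma fibre_poly_nonzero: "fibre_poly y \<noteq> 0"
  using q_nonzero p_not_smult_q by (auto simp: fibre_poly_def)

lemma degree_fibre_poly: "degree (fibre_poly y) \<le> d"
  using degree_le_d degree_smult_le[of "stereo y" q]
  by (auto simp: fibre_poly_def intro: degree_diff_le)

lemma ratmap_fibre_subset:
  "{x \<in> S2. R x = y} \<subseteq> insert NP (stereo_inv ` {w. poly (fibre_poly y) w = 0})"
proof
  fix x assume "x \<in> {x \<in> S2. R x = y}"
  then have xS: "x \<in> S2" and Rx: "R x = y" by auto
  show "x \<in> insert NP (stereo_inv ` {w. poly (fibre_poly y) w = 0})"
  proof (cases "x = NP")
    case False
    define w where "w = stereo x"
    have Rw: "quot_pt p q w = y" using ratmap_eq_quot_pt[OF False] Rx by (simp add: w_def)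
    have "poly (fibre_poly y) w = 0"
    proof (cases "y = NP")
      case True
      then show ?thesis using Rw stereo_inv_neq_NP by (auto simp: fibre_poly_def quot_pt_def split: if_splits)
    next
      case False
      then have qw: "poly q w \<noteq> 0" using Rw by (auto simp: quot_pt_def)
      then have "poly p w / poly q w = stereo y" using Rw by (auto simp: quot_pt_def)
      then show ?thesis using False qw by (simp add: fibre_poly_def field_simps)
    qed
    moreover have "x = stereo_inv w" using stereo_inv_stereo[OF xS False] by (simp add: w_def)
    ultimately show ?thesis by blast
  qed simp
qed

lemma ratmap_fibre_bound: "finite {x \<in> S2. R x = y} \<and> card {x \<in> S2. R x = y} \<le> d + 1"
proof -
  let ?Z = "{w. poly (fibre_poly y) w = 0}"
  have Zf: "finite ?Z" by (rule poly_roots_finite[OF fibre_poly_nonzero])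
  have "card ?Z \<le> d"
    using card_poly_roots_bound[OF fibre_poly_nonzero, of y] degree_fibre_poly[of y] by linarith
  moreover have "card (insert NP (stereo_inv ` ?Z)) \<le> Suc (card (stereo_inv ` ?Z))"
    using Zf by (simp add: card_insert_if)
  moreover have "card (stereo_inv ` ?Z) \<le> card ?Z" by (rule card_image_le[OF Zf])
  moreover have fin: "finite (insert NP (stereo_inv ` ?Z))" using Zf by simp
  ultimately show ?thesis
    using card_mono[OF fin ratmap_fibre_subset] finite_subset[OF ratmap_fibre_subset fin] by linarith
qed

lemma funpow_ratmap_fibre_bound:
  "finite {x \<in> S2. (R ^^ n) x = y} \<and> card {x \<in> S2. (R ^^ n) x = y} \<le> (d + 1) ^ n"
  by (rule funpow_fibre_bound) (use ratmap_in_S2 ratmap_fibre_bound in auto)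

end

section \<open>Forward invariance of the Fatou and Julia sets\<close>

lemma fatou_subset_S2: "fatou f \<subseteq> S2"
  by (auto simp: fatou_def)

lemma openin_fatou: "openin (top_of_set S2) (fatou f)"
proof (subst openin_subopen, intro ballI)
  fix x assume "x \<in> fatou f"
  then obtain U where U: "openin (top_of_set S2) U" "x \<in> U" "normal_family U (\<lambda>n. f ^^ n)"
    by (auto simp: fatou_def)
  have "U \<subseteq> fatou f" using U openin_imp_subset by (fastforce simp: fatou_def)
  then show "\<exists>T. openin (top_of_set S2) T \<and> x \<in> T \<and> T \<subseteq> fatou f" using U by blast
qed

lemma compact_julia: "compact (julia f)"
proof -
  obtain T where T: "open T" "fatou f = S2 \<inter> T" using openin_fatou openin_open by metis
  have "julia f = S2 \<inter> - T" using T by (auto simp: julia_def)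
  then show ?thesis using T(1) by (simp add: S2_def compact_Int_closed open_closed)
qed

text \<open>A subsequence of exponents either has infinitely many positive terms, which are
  one more than exponents of a subsequence converging on \<open>V\<close>, or vanishes along a
  subsequence, which then converges to the identity.\<close>
lemma normal_family_preimage:
  assumes V: "normal_family V (\<lambda>n. f ^^ n)"
    and f: "continuous_on U f" "f ` U \<subseteq> V"
  shows "normal_family U (\<lambda>n. f ^^ n)"
  unfolding normal_family_def
proof
  fix k :: "nat \<Rightarrow> nat"
  show "\<exists>r g. strict_mono r \<and> (\<forall>K. compact K \<and> K \<subseteq> U \<longrightarrow> uniform_limit K (\<lambda>j. f ^^ k (r j)) g sequentially)"
  proof (cases "finite {j. k j \<noteq> 0}")
    case False
    obtain r0 :: "nat \<Rightarrow> nat" where r0: "strict_mono r0" "\<forall>j. k (r0 j) \<noteq> 0"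
      using infinite_enumerate[OF False] unfolding mem_Collect_eq by blast
    have "\<exists>r g. strict_mono r \<and> (\<forall>K. compact K \<and> K \<subseteq> V \<longrightarrow>
        uniform_limit K (\<lambda>j. f ^^ (k (r0 (r j)) - 1)) g sequentially)"
      using V unfolding normal_family_def by (rule spec)
    then obtain r1 g where r1: "strict_mono r1"
      and lim: "\<And>K. compact K \<Longrightarrow> K \<subseteq> V \<Longrightarrow> uniform_limit K (\<lambda>j. f ^^ (k (r0 (r1 j)) - 1)) g sequentially"
      by blast
    have shift: "(f ^^ k (r0 n)) x = (f ^^ (k (r0 n) - 1)) (f x)" for n x
    proof -
      obtain m where m: "k (r0 n) = Suc m" using r0(2) not0_implies_Suc by blast
      show ?thesis by (simp only: m funpow_Suc_right comp_apply diff_Suc_1)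
    qed
    have "uniform_limit K (\<lambda>j. f ^^ k ((r0 \<circ> r1) j)) (g \<circ> f) sequentially"
      if K: "compact K" "K \<subseteq> U" for K
    proof -
      have "compact (f ` K)" by (rule compact_continuous_image[OF continuous_on_subset[OF f(1) K(2)] K(1)])
      moreover have "f ` K \<subseteq> V" using K(2) f(2) by (rule order.trans[OF image_mono])
      ultimately have "uniform_limit (f ` K) (\<lambda>j. f ^^ (k (r0 (r1 j)) - 1)) g sequentially"
        by (rule lim)
      then have "uniform_limit K (\<lambda>j x. (f ^^ (k (r0 (r1 j)) - 1)) (f x)) (\<lambda>x. g (f x)) sequentially"
        by (rule uniform_limit_compose') (simp add: Pi_iff)
      then show ?thesis unfolding comp_def by (simp only: shift[symmetric])
    qed
    moreover have "strict_mono (r0 \<circ> r1)" by (rule strict_mono_o[OF r0(1) r1])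
    ultimately show ?thesis by (intro exI[of _ "r0 \<circ> r1"] exI[of _ "g \<circ> f"]) simp
  next
    case True
    then have "infinite {j. k j = 0}"
      using Diff_infinite_finite[OF True infinite_UNIV_nat] by (simp add: set_diff_eq)
    then obtain r :: "nat \<Rightarrow> nat" where r: "strict_mono r" "\<forall>j. k (r j) = 0"
      using infinite_enumerate unfolding mem_Collect_eq by blast
    then have "uniform_limit K (\<lambda>j. f ^^ k (r j)) id sequentially" for K
      by (simp add: uniform_limit_const)
    then show ?thesis using r(1) by (intro exI[of _ r] exI[of _ id]) simp
  qed
qed

lemma limit_factors_through:
  fixes F :: "nat \<Rightarrow> 'b \<Rightarrow> 'c::t2_space"
  assumes lim: "\<And>u. u \<in> U \<Longrightarrow> (\<lambda>j. F j (f u)) \<longlonglongrightarrow> g u"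
  obtains h where "\<And>u. u \<in> U \<Longrightarrow> h (f u) = g u"
proof (rule that)
  fix u assume u: "u \<in> U"
  define v where "v = (SOME v. v \<in> U \<and> f v = f u)"
  have v: "v \<in> U \<and> f v = f u"
    unfolding v_def by (rule someI[of _ u]) (simp add: u)
  then have "(\<lambda>j. F j (f u)) \<longlonglongrightarrow> g v" using lim[of v] by simp
  then have "g v = g u" using lim[OF u] LIMSEQ_unique by blast
  then show "g (SOME v. v \<in> U \<and> f v = f u) = g u" by (simp add: v_def)
qed

lemma normal_family_image:
  assumes U: "normal_family U (\<lambda>n. f ^^ n)"
    and lift: "\<And>K. compact K \<Longrightarrow> K \<subseteq> f ` U \<Longrightarrow> \<exists>L. compact L \<and> L \<subseteq> U \<and> K \<subseteq> f ` L"
  shows "normal_family (f ` U) (\<lambda>n. f ^^ n)"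
  unfolding normal_family_def
proof
  fix k :: "nat \<Rightarrow> nat"
  have "\<exists>r g. strict_mono r \<and> (\<forall>K. compact K \<and> K \<subseteq> U \<longrightarrow>
      uniform_limit K (\<lambda>j. f ^^ Suc (k (r j))) g sequentially)"
    using U unfolding normal_family_def by (rule spec)
  then obtain r g where r: "strict_mono r"
    and lim: "\<And>K. compact K \<Longrightarrow> K \<subseteq> U \<Longrightarrow> uniform_limit K (\<lambda>j. f ^^ Suc (k (r j))) g sequentially"
    by blast
  have shift: "(f ^^ Suc n) u = (f ^^ n) (f u)" for n u
    by (simp only: funpow_Suc_right comp_apply)
  have pt: "(\<lambda>j. (f ^^ k (r j)) (f u)) \<longlonglongrightarrow> g u" if "u \<in> U" for u
  proof -
    have "(\<lambda>j. (f ^^ Suc (k (r j))) u) \<longlonglongrightarrow> g u"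
      by (rule tendsto_uniform_limitI[OF lim[of "{u}"]]) (use that in auto)
    then show ?thesis by (simp only: shift)
  qed
  obtain h where h: "\<And>u. u \<in> U \<Longrightarrow> h (f u) = g u"
    using limit_factors_through[of U "\<lambda>j. f ^^ k (r j)" f g] pt by blast
  have "uniform_limit K (\<lambda>j. f ^^ k (r j)) h sequentially" if K: "compact K" "K \<subseteq> f ` U" for K
  proof -
    obtain L where L: "compact L" "L \<subseteq> U" "K \<subseteq> f ` L" using lift[OF K] by blast
    define s where "s y = (SOME u. u \<in> L \<and> f u = y)" for y
    have "s y \<in> L \<and> f (s y) = y" if "y \<in> K" for y
    proof -
      have "\<exists>u. u \<in> L \<and> f u = y" using that L(3) by blast
      then show ?thesis unfolding s_def by (rule someI_ex)
    qed
    then have s: "s y \<in> L" "f (s y) = y" if "y \<in> K" for y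
      using that by simp_all
    have ul: "uniform_limit K (\<lambda>j y. (f ^^ Suc (k (r j))) (s y)) (\<lambda>y. g (s y)) sequentially"
      using lim[OF L(1,2)] by (rule uniform_limit_compose') (simp add: Pi_iff s(1))
    have gh: "g (s y) = h y" if "y \<in> K" for y
      using h[of "s y"] s[OF that] L(2) by auto
    have "uniform_limit K (\<lambda>j y. (f ^^ Suc (k (r j))) (s y)) (\<lambda>y. g (s y)) sequentially
        \<longleftrightarrow> uniform_limit K (\<lambda>j. f ^^ k (r j)) h sequentially"
      by (rule uniform_limit_cong') (simp_all only: shift s(2) gh)
    then show ?thesis using ul by blast
  qed
  then show "\<exists>r g. strict_mono r \<and> (\<forall>K. compact K \<and> K \<subseteq> f ` U \<longrightarrow> uniform_limit K (\<lambda>j. f ^^ k (r j)) g sequentially)"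
    using r by (intro exI[of _ r] exI[of _ h]) simp
qed

context rational_map
begin

lemma compact_lift_ratmap_image:
  assumes U: "openin (top_of_set S2) U" and K: "compact K" "K \<subseteq> R ` U"
  shows "\<exists>L. compact L \<and> L \<subseteq> U \<and> K \<subseteq> R ` L"
proof -
  obtain T where T: "open T" "U = S2 \<inter> T" using U openin_open by metis
  have "\<forall>y\<in>K. \<exists>u. u \<in> U \<and> R u = y" using K(2) by blast
  from bchoice[OF this] obtain u where u: "\<forall>y\<in>K. u y \<in> U \<and> R (u y) = y" by blast
  have "\<forall>y\<in>K. \<exists>e>0. cball (u y) e \<subseteq> T"
    using u T unfolding open_contains_cball by auto
  from bchoice[OF this] obtain e where e: "\<forall>y\<in>K. e y > 0 \<and> cball (u y) (e y) \<subseteq> T" by blast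
  have "\<forall>y\<in>K. \<exists>W. open W \<and> R ` (S2 \<inter> ball (u y) (e y)) = S2 \<inter> W"
  proof
    fix y
    have "openin (top_of_set S2) (R ` (S2 \<inter> ball (u y) (e y)))"
      by (rule openin_ratmap_image[OF openin_open_Int[OF open_ball]])
    then show "\<exists>W. open W \<and> R ` (S2 \<inter> ball (u y) (e y)) = S2 \<inter> W"
      by (simp add: openin_open)
  qed
  from bchoice[OF this] obtain W
    where W: "\<forall>y\<in>K. open (W y) \<and> R ` (S2 \<inter> ball (u y) (e y)) = S2 \<inter> W y" by blast
  have KW: "y \<in> W y" if "y \<in> K" for y
  proof -
    have "u y \<in> S2 \<inter> ball (u y) (e y)" using u e T that by auto
    then have "R (u y) \<in> S2 \<inter> W y" using W that by (metis imageI)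
    then show ?thesis using u that by simp
  qed
  obtain C where C: "C \<subseteq> K" "finite C" "K \<subseteq> (\<Union>y\<in>C. W y)"
    by (rule compactE_image[OF K(1), of K W]) (use W KW in auto)
  define L where "L = (\<Union>y\<in>C. S2 \<inter> cball (u y) (e y))"
  have "compact L" unfolding L_def
    by (intro compact_UN C(2)) (simp add: S2_def compact_Int_closed closed_Int_compact)
  moreover have "L \<subseteq> U" using e C(1) by (auto simp: L_def T(2))
  moreover have "K \<subseteq> R ` L"
  proof
    fix z assume z: "z \<in> K"
    then obtain y where y: "y \<in> C" "z \<in> W y" using C(3) by blast
    have "z \<in> S2" using z K(2) ratmap_in_S2 by auto
    then have "z \<in> R ` (S2 \<inter> ball (u y) (e y))" using W y C(1) by auto
    moreover have "S2 \<inter> ball (u y) (e y) \<subseteq> L" unfolding L_def using y(1) by auto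
    ultimately show "z \<in> R ` L" by auto
  qed
  ultimately show ?thesis by blast
qed

lemma fatou_ratmap_preimage:
  assumes "x \<in> S2" "R x \<in> fatou R" shows "x \<in> fatou R"
proof -
  obtain V where V: "openin (top_of_set S2) V" "R x \<in> V" "normal_family V (\<lambda>n. R ^^ n)"
    using assms(2) by (auto simp: fatou_def)
  define U where "U = S2 \<inter> R -` V"
  have "openin (top_of_set S2) U" unfolding U_def
    by (rule continuous_openin_preimage[OF continuous_on_ratmap _ V(1)]) (simp add: ratmap_in_S2)
  moreover have "normal_family U (\<lambda>n. R ^^ n)"
  proof (rule normal_family_preimage[OF V(3)])
    show "continuous_on U R" by (rule continuous_on_subset[OF continuous_on_ratmap]) (simp add: U_def)
    show "R ` U \<subseteq> V" by (auto simp: U_def)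
  qed
  ultimately show ?thesis using assms(1) V(2) unfolding fatou_def U_def by blast
qed

lemma fatou_ratmap_image: "x \<in> fatou R \<Longrightarrow> R x \<in> fatou R"
proof -
  assume "x \<in> fatou R"
  then obtain U where U: "openin (top_of_set S2) U" "x \<in> U" "normal_family U (\<lambda>n. R ^^ n)"
    by (auto simp: fatou_def)
  have "normal_family (R ` U) (\<lambda>n. R ^^ n)"
    using normal_family_image[OF U(3) compact_lift_ratmap_image[OF U(1)]] .
  then show ?thesis
    using openin_ratmap_image[OF U(1)] U(2) ratmap_in_S2 unfolding fatou_def by blast
qed

lemma julia_ratmap_image: "x \<in> julia R \<Longrightarrow> R x \<in> julia R"
  using fatou_ratmap_preimage[of x] ratmap_in_S2[of x] by (auto simp: julia_def)

end

section \<open>Weighted composition operators on \<open>\<ell>\<^sup>2\<close>\<close>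

definition wcomp_op :: "pt set \<Rightarrow> (pt \<Rightarrow> pt) \<Rightarrow> (pt \<Rightarrow> complex) \<Rightarrow> op" where
  "wcomp_op X0 \<phi> f = (\<lambda>\<xi>. if \<xi> \<in> l2 X0 then (\<lambda>x. if x \<in> X0 then f x * \<xi> (\<phi> x) else 0) else (\<lambda>x. 0))"

lemma rho_eq_wcomp_op: "rho R X n f = wcomp_op (Xcirc R X) (R ^^ n) f"
  by (simp add: rho_def wcomp_op_def)

abbreviation sq :: "complex \<Rightarrow> real" where "sq z \<equiv> (cmod z)^2"

lemma l2_vanishes: "\<xi> \<in> l2 X0 \<Longrightarrow> x \<notin> X0 \<Longrightarrow> \<xi> x = 0"
  unfolding l2_def by blast

lemma l2_summable: "\<xi> \<in> l2 X0 \<Longrightarrow> (\<lambda>x. sq (\<xi> x)) summable_on X0"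
  by (simp add: l2_def)

lemma zero_in_l2: "(\<lambda>x. 0) \<in> l2 X0"
  by (simp add: l2_def)

lemma nrm_nonneg: "nrm X0 \<xi> \<ge> 0"
  unfolding nrm_def by (intro real_sqrt_ge_zero infsum_nonneg) simp

lemma nrm_sq: "nrm X0 \<xi> ^ 2 = infsum (\<lambda>x. sq (\<xi> x)) X0"
  unfolding nrm_def by (simp add: infsum_nonneg)

lemma l2_cmult: "\<xi> \<in> l2 X0 \<Longrightarrow> (\<lambda>x. c * \<xi> x) \<in> l2 X0"
proof -
  assume a: "\<xi> \<in> l2 X0"
  have "(\<lambda>x. (cmod c)^2 * sq (\<xi> x)) summable_on X0"
    using l2_summable[OF a] by (rule summable_on_cmult_right)
  then show ?thesis using a by (simp add: l2_def norm_mult power_mult_distrib)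
qed

lemma nrm_cmult: "\<xi> \<in> l2 X0 \<Longrightarrow> nrm X0 (\<lambda>x. c * \<xi> x) = cmod c * nrm X0 \<xi>"
proof -
  assume a: "\<xi> \<in> l2 X0"
  have "infsum (\<lambda>x. sq (c * \<xi> x)) X0 = infsum (\<lambda>x. (cmod c)^2 * sq (\<xi> x)) X0"
    by (simp add: norm_mult power_mult_distrib)
  also have "\<dots> = (cmod c)^2 * infsum (\<lambda>x. sq (\<xi> x)) X0"
    using l2_summable[OF a] by (intro infsum_cmult_right) simp
  finally show ?thesis by (simp add: nrm_def real_sqrt_mult)
qed

lemma sq_add_le: "sq (u + v) \<le> 2 * sq u + 2 * sq v"
proof -
  have "sq (u + v) \<le> (cmod u + cmod v)^2" by (simp add: power_mono norm_triangle_ineq)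
  also have "\<dots> \<le> 2 * sq u + 2 * sq v" by (smt (verit) sum_squares_bound power2_sum zero_le_power2 four_x_squared)
  finally show ?thesis .
qed

lemma l2_add: "\<xi> \<in> l2 X0 \<Longrightarrow> \<eta> \<in> l2 X0 \<Longrightarrow> (\<lambda>x. \<xi> x + \<eta> x) \<in> l2 X0"
proof -
  assume a: "\<xi> \<in> l2 X0" and b: "\<eta> \<in> l2 X0"
  have s: "(\<lambda>x. 2 * sq (\<xi> x) + 2 * sq (\<eta> x)) summable_on X0"
    by (intro summable_on_add summable_on_cmult_right l2_summable a b)
  have "(\<lambda>x. sq (\<xi> x + \<eta> x)) summable_on X0"
    by (rule summable_on_comparison_test[OF s]) (auto simp: sq_add_le)
  then show ?thesis using a b by (simp add: l2_def)
qed

lemma l2_diff: "\<xi> \<in> l2 X0 \<Longrightarrow> \<eta> \<in> l2 X0 \<Longrightarrow> (\<lambda>x. \<xi> x - \<eta> x) \<in> l2 X0"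
  using l2_add[of \<xi> X0 "\<lambda>x. (-1) * \<eta> x"] l2_cmult[of \<eta> X0 "-1"] by simp

lemma nrm_diff_le:
  assumes a: "\<xi> \<in> l2 X0" and b: "\<eta> \<in> l2 X0"
  shows "nrm X0 (\<lambda>x. \<xi> x - \<eta> x) \<le> 2 * (nrm X0 \<xi> + nrm X0 \<eta>)"
proof -
  have s1: "(\<lambda>x. sq (\<xi> x - \<eta> x)) summable_on X0" using l2_diff[OF a b] by (simp add: l2_def)
  have s2: "(\<lambda>x. 2 * sq (\<xi> x) + 2 * sq (\<eta> x)) summable_on X0"
    by (intro summable_on_add summable_on_cmult_right l2_summable a b)
  have "nrm X0 (\<lambda>x. \<xi> x - \<eta> x) ^ 2 \<le> infsum (\<lambda>x. 2 * sq (\<xi> x) + 2 * sq (\<eta> x)) X0"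
    unfolding nrm_sq using sq_add_le[of _ "- _"]
    by (intro infsum_mono s1 s2) (metis diff_conv_add_uminus norm_minus_cancel)
  also have "\<dots> = 2 * nrm X0 \<xi> ^ 2 + 2 * nrm X0 \<eta> ^ 2"
    using l2_summable[OF a] l2_summable[OF b]
    by (simp add: nrm_sq infsum_add summable_on_cmult_right infsum_cmult_right)
  also have "\<dots> \<le> (2 * (nrm X0 \<xi> + nrm X0 \<eta>)) ^ 2"
    using nrm_nonneg[of X0 \<xi>] nrm_nonneg[of X0 \<eta>] by (simp add: power2_eq_square algebra_simps)
  finally show ?thesis
    by (rule power2_le_imp_le) (simp add: nrm_nonneg)
qed

lemma norm_le_nrm:
  assumes "\<xi> \<in> l2 X0" "x \<in> X0" shows "cmod (\<xi> x) \<le> nrm X0 \<xi>"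
proof -
  have "sum (\<lambda>x. sq (\<xi> x)) {x} \<le> infsum (\<lambda>x. sq (\<xi> x)) X0"
    by (rule finite_sum_le_infsum[OF l2_summable[OF assms(1)]]) (use assms(2) in auto)
  then have "sqrt (sq (\<xi> x)) \<le> nrm X0 \<xi>" unfolding nrm_def by (intro real_sqrt_le_mono) simp
  then show ?thesis by simp
qed

lemma nrm_eq_0_imp: "\<xi> \<in> l2 X0 \<Longrightarrow> nrm X0 \<xi> = 0 \<Longrightarrow> \<xi> = (\<lambda>x. 0)"
  using norm_le_nrm[of \<xi> X0] l2_vanishes[of \<xi> X0] by fastforce

definition basis_vec :: "pt \<Rightarrow> pt \<Rightarrow> complex" where
  "basis_vec y = (\<lambda>z. if z = y then 1 else 0)"

lemma basis_vec_in_l2: "y \<in> X0 \<Longrightarrow> basis_vec y \<in> l2 X0"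
  and nrm_basis_vec: "y \<in> X0 \<Longrightarrow> nrm X0 (basis_vec y) = 1"
proof -
  assume y: "y \<in> X0"
  have "(\<lambda>x. sq (basis_vec y x)) summable_on X0 \<longleftrightarrow> (\<lambda>x. sq (basis_vec y x)) summable_on {y}"
    by (rule summable_on_cong_neutral) (use y in \<open>auto simp: basis_vec_def\<close>)
  then show "basis_vec y \<in> l2 X0" using y by (auto simp: l2_def basis_vec_def)
  have "infsum (\<lambda>x. sq (basis_vec y x)) X0 = infsum (\<lambda>x. sq (basis_vec y x)) {y}"
    by (rule infsum_cong_neutral) (use y in \<open>auto simp: basis_vec_def\<close>)
  then show "nrm X0 (basis_vec y) = 1" by (simp add: nrm_def basis_vec_def)
qed

lemma sum_comp_le_fibre_bound:
  fixes a :: "pt \<Rightarrow> real"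
  assumes F: "finite F" "F \<subseteq> X0" and a: "\<And>y. a y \<ge> 0"
    and fib: "\<forall>y. finite {x\<in>X0. \<phi> x = y} \<and> card {x\<in>X0. \<phi> x = y} \<le> D"
  shows "(\<Sum>x\<in>F. a (\<phi> x)) \<le> D * (\<Sum>y\<in>\<phi> ` F. a y)"
proof -
  have "(\<Sum>x\<in>F. a (\<phi> x)) = (\<Sum>y\<in>\<phi> ` F. \<Sum>x | x \<in> F \<and> \<phi> x = y. a (\<phi> x))"
    by (rule sum.image_gen[OF F(1)])
  also have "\<dots> = (\<Sum>y\<in>\<phi> ` F. real (card {x. x \<in> F \<and> \<phi> x = y}) * a y)"
    by (rule sum.cong) auto
  also have "\<dots> \<le> (\<Sum>y\<in>\<phi> ` F. D * a y)"
  proof (rule sum_mono)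
    fix y
    have "card {x. x \<in> F \<and> \<phi> x = y} \<le> card {x\<in>X0. \<phi> x = y}"
      using fib[rule_format, of y] F(2) by (intro card_mono) auto
    then have "card {x. x \<in> F \<and> \<phi> x = y} \<le> D" using fib order.trans by blast
    then show "real (card {x. x \<in> F \<and> \<phi> x = y}) * a y \<le> D * a y"
      using a by (intro mult_right_mono) auto
  qed
  finally show ?thesis by (simp add: sum_distrib_left)
qed

lemma weighted_comp_in_l2:
  assumes xi: "\<xi> \<in> l2 X0" and B: "\<forall>x\<in>X0. cmod (f x) \<le> B"
    and inv: "\<forall>x\<in>X0. \<phi> x \<in> X0" and fib: "\<forall>y. finite {x\<in>X0. \<phi> x = y} \<and> card {x\<in>X0. \<phi> x = y} \<le> D"
  defines "\<eta> \<equiv> (\<lambda>x. if x \<in> X0 then f x * \<xi> (\<phi> x) else 0)"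
  shows "\<eta> \<in> l2 X0" "infsum (\<lambda>x. sq (\<eta> x)) X0 \<le> B^2 * D * infsum (\<lambda>x. sq (\<xi> x)) X0"
proof -
  let ?a = "\<lambda>y. sq (\<xi> y)"
  have bound: "sum (\<lambda>x. sq (\<eta> x)) F \<le> B^2 * D * infsum ?a X0" if F: "finite F" "F \<subseteq> X0" for F
  proof (cases "F = {}")
    case True then show ?thesis by (simp add: infsum_nonneg)
  next
    case False
    then obtain x where "x \<in> X0" using F by blast
    then have B0: "B \<ge> 0" using B norm_ge_zero order.trans by blast
    have "sum (\<lambda>x. sq (\<eta> x)) F \<le> sum (\<lambda>x. B^2 * ?a (\<phi> x)) F"
    proof (rule sum_mono)
      fix x assume "x \<in> F"
      then have x: "x \<in> X0" using F by blast
      then have "sq (\<eta> x) = (cmod (f x))^2 * ?a (\<phi> x)" by (simp add: \<eta>_def norm_mult power_mult_distrib)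
      also have "\<dots> \<le> B^2 * ?a (\<phi> x)" using B x by (intro mult_right_mono power_mono) auto
      finally show "sq (\<eta> x) \<le> B^2 * ?a (\<phi> x)" .
    qed
    also have "\<dots> = B^2 * sum (\<lambda>x. ?a (\<phi> x)) F" by (simp add: sum_distrib_left)
    also have "\<dots> \<le> B^2 * (D * sum ?a (\<phi> ` F))"
      by (intro mult_left_mono sum_comp_le_fibre_bound[OF F _ fib]) auto
    also have "sum ?a (\<phi> ` F) \<le> infsum ?a X0"
      by (rule finite_sum_le_infsum[OF l2_summable[OF xi]]) (use F inv in auto)
    finally show ?thesis using B0 by (simp add: mult_left_mono mult.assoc)
  qed
  have summ: "(\<lambda>x. sq (\<eta> x)) summable_on X0"
  proof (rule nonneg_bdd_above_summable_on)
    show "bdd_above (sum (\<lambda>x. sq (\<eta> x)) ` {F. F \<subseteq> X0 \<and> finite F})"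
      using bound by (intro bdd_aboveI[of _ "B^2 * D * infsum ?a X0"]) auto
  qed simp
  then show "\<eta> \<in> l2 X0" by (simp add: l2_def \<eta>_def)
  show "infsum (\<lambda>x. sq (\<eta> x)) X0 \<le> B^2 * D * infsum (\<lambda>x. sq (\<xi> x)) X0"
    using bound by (intro infsum_le_finite_sums summ) auto
qed

lemma bops_bound: "T \<in> bops X0 \<Longrightarrow> \<exists>C\<ge>0. \<forall>\<xi>\<in>l2 X0. nrm X0 (T \<xi>) \<le> C * nrm X0 \<xi>"
proof -
  assume "T \<in> bops X0"
  then obtain C where C: "\<forall>\<xi>\<in>l2 X0. nrm X0 (T \<xi>) \<le> C * nrm X0 \<xi>" unfolding bops_def by blast
  have "\<forall>\<xi>\<in>l2 X0. nrm X0 (T \<xi>) \<le> max C 0 * nrm X0 \<xi>"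
    using C nrm_nonneg by (meson max.cobounded1 mult_right_mono order.trans)
  then show ?thesis by (intro exI[of _ "max C 0"]) simp
qed

lemma bops_l2: "T \<in> bops X0 \<Longrightarrow> \<xi> \<in> l2 X0 \<Longrightarrow> T \<xi> \<in> l2 X0"
  unfolding bops_def by blast

lemma bops_cmult: "T \<in> bops X0 \<Longrightarrow> \<xi> \<in> l2 X0 \<Longrightarrow> T (\<lambda>x. c * \<xi> x) = (\<lambda>x. c * T \<xi> x)"
  unfolding bops_def by blast

lemma bops_add:
  "T \<in> bops X0 \<Longrightarrow> \<xi> \<in> l2 X0 \<Longrightarrow> \<eta> \<in> l2 X0 \<Longrightarrow> T (\<lambda>x. \<xi> x + \<eta> x) = (\<lambda>x. T \<xi> x + T \<eta> x)"
  unfolding bops_def by blast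

lemma bops_vanishes: "T \<in> bops X0 \<Longrightarrow> \<xi> \<notin> l2 X0 \<Longrightarrow> T \<xi> = (\<lambda>x. 0)"
  unfolding bops_def by blast

lemma bops_diff:
  assumes T: "T \<in> bops X0" and A: "A \<in> bops X0"
  shows "(\<lambda>\<xi> x. T \<xi> x - A \<xi> x) \<in> bops X0"
proof -
  obtain C1 where C1: "\<forall>\<xi>\<in>l2 X0. nrm X0 (T \<xi>) \<le> C1 * nrm X0 \<xi>" using bops_bound[OF T] by blast
  obtain C2 where C2: "\<forall>\<xi>\<in>l2 X0. nrm X0 (A \<xi>) \<le> C2 * nrm X0 \<xi>" using bops_bound[OF A] by blast
  have "nrm X0 (\<lambda>x. T \<xi> x - A \<xi> x) \<le> (2 * (C1 + C2)) * nrm X0 \<xi>" if "\<xi> \<in> l2 X0" for \<xi>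
  proof -
    have "nrm X0 (\<lambda>x. T \<xi> x - A \<xi> x) \<le> 2 * (nrm X0 (T \<xi>) + nrm X0 (A \<xi>))"
      by (rule nrm_diff_le[OF bops_l2[OF T that] bops_l2[OF A that]])
    also have "\<dots> \<le> 2 * (C1 * nrm X0 \<xi> + C2 * nrm X0 \<xi>)"
      using C1 C2 that by (intro mult_left_mono add_mono) auto
    finally show ?thesis by (simp add: algebra_simps)
  qed
  then show ?thesis
    unfolding bops_def
  proof (intro CollectI conjI allI ballI impI exI)
    fix \<xi> assume "\<xi> \<notin> l2 X0"
    then show "(\<lambda>x. T \<xi> x - A \<xi> x) = (\<lambda>x. 0)" using bops_vanishes T A by simp
  next
    fix \<xi> assume "\<xi> \<in> l2 X0"
    then show "(\<lambda>x. T \<xi> x - A \<xi> x) \<in> l2 X0" using l2_diff bops_l2 T A by blast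
  next
    fix \<xi> \<eta> assume "\<xi> \<in> l2 X0" "\<eta> \<in> l2 X0"
    then show "(\<lambda>x. T (\<lambda>x. \<xi> x + \<eta> x) x - A (\<lambda>x. \<xi> x + \<eta> x) x)
        = (\<lambda>x. (T \<xi> x - A \<xi> x) + (T \<eta> x - A \<eta> x))"
      by (simp add: bops_add[OF T] bops_add[OF A] algebra_simps)
  next
    fix c \<xi> assume "\<xi> \<in> l2 X0"
    then show "(\<lambda>x. T (\<lambda>x. c * \<xi> x) x - A (\<lambda>x. c * \<xi> x) x) = (\<lambda>x. c * (T \<xi> x - A \<xi> x))"
      by (simp add: bops_cmult[OF T] bops_cmult[OF A] right_diff_distrib)
  qed
qed

lemma bdd_above_opnorm:
  assumes "T \<in> bops X0" shows "bdd_above {nrm X0 (T \<xi>) | \<xi>. \<xi> \<in> l2 X0 \<and> nrm X0 \<xi> \<le> 1}"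
proof -
  obtain C where C: "C \<ge> 0" "\<forall>\<xi>\<in>l2 X0. nrm X0 (T \<xi>) \<le> C * nrm X0 \<xi>"
    using bops_bound[OF assms] by blast
  have "nrm X0 (T \<xi>) \<le> C" if "\<xi> \<in> l2 X0" "nrm X0 \<xi> \<le> 1" for \<xi>
    using C that by (meson mult_left_le order.trans)
  then show ?thesis by (intro bdd_aboveI[of _ C]) blast
qed

lemma nrm_le_opnorm:
  assumes T: "T \<in> bops X0" and xi: "\<xi> \<in> l2 X0"
  shows "nrm X0 (T \<xi>) \<le> opnorm X0 T * nrm X0 \<xi>"
proof (cases "nrm X0 \<xi> = 0")
  case True
  then have "\<xi> = (\<lambda>x. 0 * \<xi> x)" using nrm_eq_0_imp xi by simp
  then have "T \<xi> = (\<lambda>x. 0)" using bops_cmult[OF T xi, of 0] by simp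
  then show ?thesis using True by (simp add: nrm_def)
next
  case False
  then have np: "nrm X0 \<xi> > 0" using nrm_nonneg order_le_less by metis
  define c where "c = complex_of_real (1 / nrm X0 \<xi>)"
  have c: "cmod c = 1 / nrm X0 \<xi>" unfolding c_def norm_of_real using np by simp
  have eta: "(\<lambda>x. c * \<xi> x) \<in> l2 X0" by (rule l2_cmult[OF xi])
  have "nrm X0 (\<lambda>x. c * \<xi> x) = 1" using np by (simp add: nrm_cmult[OF xi] c)
  then have "nrm X0 (T (\<lambda>x. c * \<xi> x)) \<le> opnorm X0 T"
    unfolding opnorm_def using eta by (intro cSup_upper bdd_above_opnorm[OF T]) auto
  then have "nrm X0 (T \<xi>) / nrm X0 \<xi> \<le> opnorm X0 T"
    using bops_l2[OF T xi] by (simp add: bops_cmult[OF T xi] nrm_cmult c)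
  then show ?thesis using np by (simp add: field_simps mult.commute)
qed

lemma norm_apply_le_opnorm:
  assumes "T \<in> bops X0" "\<xi> \<in> l2 X0" "x \<in> X0"
  shows "cmod (T \<xi> x) \<le> opnorm X0 T * nrm X0 \<xi>"
  using norm_le_nrm[OF bops_l2[OF assms(1,2)] assms(3)] nrm_le_opnorm[OF assms(1,2)] by linarith

locale finite_fibres =
  fixes X0 :: "pt set" and \<phi> :: "pt \<Rightarrow> pt" and D :: nat
  assumes maps_to: "\<forall>x\<in>X0. \<phi> x \<in> X0"
    and fibres: "\<forall>y. finite {x\<in>X0. \<phi> x = y} \<and> card {x\<in>X0. \<phi> x = y} \<le> D"
begin

lemma wcomp_op_apply: "\<xi> \<in> l2 X0 \<Longrightarrow> wcomp_op X0 \<phi> f \<xi> = (\<lambda>x. if x \<in> X0 then f x * \<xi> (\<phi> x) else 0)"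
  by (simp add: wcomp_op_def)

lemma wcomp_op_in_l2:
  assumes "\<xi> \<in> l2 X0" "\<forall>x\<in>X0. cmod (f x) \<le> B"
  shows "wcomp_op X0 \<phi> f \<xi> \<in> l2 X0"
  unfolding wcomp_op_apply[OF assms(1)] by (rule weighted_comp_in_l2(1)[OF assms maps_to fibres])

lemma nrm_wcomp_op_le:
  assumes "\<xi> \<in> l2 X0" "\<forall>x\<in>X0. cmod (f x) \<le> B" "B \<ge> 0"
  shows "nrm X0 (wcomp_op X0 \<phi> f \<xi>) \<le> B * sqrt D * nrm X0 \<xi>"
proof -
  have "infsum (\<lambda>x. sq (wcomp_op X0 \<phi> f \<xi> x)) X0 \<le> B^2 * D * infsum (\<lambda>x. sq (\<xi> x)) X0"
    unfolding wcomp_op_apply[OF assms(1)] by (rule weighted_comp_in_l2(2)[OF assms(1,2) maps_to fibres])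
  then have "nrm X0 (wcomp_op X0 \<phi> f \<xi>) \<le> sqrt (B^2 * D * infsum (\<lambda>x. sq (\<xi> x)) X0)"
    unfolding nrm_def by (rule real_sqrt_le_mono)
  also have "\<dots> = B * sqrt D * nrm X0 \<xi>" using assms(3) by (simp add: nrm_def real_sqrt_mult)
  finally show ?thesis .
qed

lemma wcomp_op_in_bops:
  assumes "\<forall>x\<in>X0. cmod (f x) \<le> B" "B \<ge> 0"
  shows "wcomp_op X0 \<phi> f \<in> bops X0"
  unfolding bops_def
proof (intro CollectI conjI allI ballI impI)
  fix \<xi> show "\<xi> \<notin> l2 X0 \<Longrightarrow> wcomp_op X0 \<phi> f \<xi> = (\<lambda>x. 0)" by (simp add: wcomp_op_def)
next
  fix \<xi> assume "\<xi> \<in> l2 X0" then show "wcomp_op X0 \<phi> f \<xi> \<in> l2 X0" using wcomp_op_in_l2 assms by blast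
next
  fix \<xi> \<eta> assume "\<xi> \<in> l2 X0" "\<eta> \<in> l2 X0"
  then show "wcomp_op X0 \<phi> f (\<lambda>x. \<xi> x + \<eta> x) = (\<lambda>x. wcomp_op X0 \<phi> f \<xi> x + wcomp_op X0 \<phi> f \<eta> x)"
    using l2_add by (auto simp: wcomp_op_def distrib_left)
next
  fix c \<xi> assume "\<xi> \<in> l2 X0"
  then show "wcomp_op X0 \<phi> f (\<lambda>x. c * \<xi> x) = (\<lambda>x. c * wcomp_op X0 \<phi> f \<xi> x)"
    using l2_cmult by (auto simp: wcomp_op_def)
next
  show "\<exists>C. \<forall>\<xi>\<in>l2 X0. nrm X0 (wcomp_op X0 \<phi> f \<xi>) \<le> C * nrm X0 \<xi>"
    using nrm_wcomp_op_le[OF _ assms] by blast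
qed

lemma opnorm_wcomp_op_le:
  assumes "\<forall>x\<in>X0. cmod (f x) \<le> B" "B \<ge> 0"
  shows "opnorm X0 (wcomp_op X0 \<phi> f) \<le> B * sqrt D"
  unfolding opnorm_def
proof (rule cSup_least)
  show "{nrm X0 (wcomp_op X0 \<phi> f \<xi>) |\<xi>. \<xi> \<in> l2 X0 \<and> nrm X0 \<xi> \<le> 1} \<noteq> {}"
    using zero_in_l2 by (force simp: nrm_def)
  fix r assume "r \<in> {nrm X0 (wcomp_op X0 \<phi> f \<xi>) |\<xi>. \<xi> \<in> l2 X0 \<and> nrm X0 \<xi> \<le> 1}"
  then obtain \<xi> where xi: "\<xi> \<in> l2 X0" "nrm X0 \<xi> \<le> 1" "r = nrm X0 (wcomp_op X0 \<phi> f \<xi>)"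
    by blast
  have "r \<le> B * sqrt D * nrm X0 \<xi>" using nrm_wcomp_op_le[OF xi(1) assms] xi(3) by simp
  also have "\<dots> \<le> B * sqrt D" using assms(2) xi(2) by (intro mult_left_le) auto
  finally show "r \<le> B * sqrt D" .
qed

end

section \<open>The space \<open>C\<^sub>0(X)\<close>\<close>

lemma C0_cont: "f \<in> C0 X \<Longrightarrow> continuous_on X f"
  by (simp add: C0_def)

lemma C0_small: "f \<in> C0 X \<Longrightarrow> e > 0 \<Longrightarrow> \<exists>K. compact K \<and> K \<subseteq> X \<and> (\<forall>x\<in>X - K. cmod (f x) < e)"
  by (simp add: C0_def)

lemma C0_bounded: assumes "f \<in> C0 X" shows "\<exists>B\<ge>0. \<forall>x\<in>X. cmod (f x) \<le> B"
proof -
  obtain K where K: "compact K" "K \<subseteq> X" "\<forall>x\<in>X - K. cmod (f x) < 1"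
    using C0_small[OF assms, of 1] by auto
  have "compact (f ` K)"
    by (rule compact_continuous_image[OF continuous_on_subset[OF C0_cont[OF assms] K(2)] K(1)])
  then obtain M where M: "\<forall>y\<in>f ` K. norm y \<le> M" using compact_imp_bounded bounded_iff by metis
  have "cmod (f x) \<le> max M 1" if "x \<in> X" for x
    using M K(3) that by (cases "x \<in> K") (auto intro: max.coboundedI1 max.coboundedI2 less_imp_le)
  then show ?thesis by (intro exI[of _ "max M 1"]) auto
qed

lemma C0_dominated:
  assumes f: "f \<in> C0 X" and g: "continuous_on X g"
    and le: "\<forall>x\<in>X. cmod (g x) \<le> c * cmod (f x)" and c: "c > 0"
  shows "g \<in> C0 X"
  unfolding C0_def
proof (intro CollectI conjI g allI impI)
  fix e :: real assume e: "e > 0"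
  obtain K where K: "compact K" "K \<subseteq> X" "\<forall>x\<in>X - K. cmod (f x) < e / c"
    using C0_small[OF f, of "e / c"] e c by auto
  have "cmod (g x) < e" if x: "x \<in> X - K" for x
  proof -
    have "cmod (g x) \<le> c * cmod (f x)" using le x by blast
    also have "\<dots> < c * (e / c)" using K(3) x c by (intro mult_strict_left_mono) auto
    finally show ?thesis using c by simp
  qed
  then show "\<exists>K. compact K \<and> K \<subseteq> X \<and> (\<forall>x\<in>X - K. cmod (g x) < e)" using K by blast
qed

lemma C0_add:
  assumes f: "f \<in> C0 X" and g: "g \<in> C0 X" shows "(\<lambda>x. f x + g x) \<in> C0 X"
  unfolding C0_def
proof (intro CollectI conjI allI impI)
  show "continuous_on X (\<lambda>x. f x + g x)" using C0_cont[OF f] C0_cont[OF g] by (intro continuous_intros)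
  fix e :: real assume e: "e > 0"
  obtain K1 where K1: "compact K1" "K1 \<subseteq> X" "\<forall>x\<in>X - K1. cmod (f x) < e / 2"
    using C0_small[OF f, of "e / 2"] e by auto
  obtain K2 where K2: "compact K2" "K2 \<subseteq> X" "\<forall>x\<in>X - K2. cmod (g x) < e / 2"
    using C0_small[OF g, of "e / 2"] e by auto
  have "cmod (f x + g x) < e" if x: "x \<in> X - (K1 \<union> K2)" for x
  proof -
    have "cmod (f x + g x) \<le> cmod (f x) + cmod (g x)" by (rule norm_triangle_ineq)
    also have "\<dots> < e / 2 + e / 2" using K1(3) K2(3) x by (intro add_strict_mono) auto
    finally show ?thesis by simp
  qed
  then show "\<exists>K. compact K \<and> K \<subseteq> X \<and> (\<forall>x\<in>X - K. cmod (f x + g x) < e)"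
    using K1 K2 by (intro exI[of _ "K1 \<union> K2"]) auto
qed

lemma C0_zero: "(\<lambda>x. 0) \<in> C0 X"
  unfolding C0_def by (auto intro!: exI[of _ "{}"])

lemma C0_cmult: "f \<in> C0 X \<Longrightarrow> (\<lambda>x. c * f x) \<in> C0 X"
proof (cases "c = 0")
  case True then show "(\<lambda>x. c * f x) \<in> C0 X" using C0_zero by simp
next
  case False
  assume f: "f \<in> C0 X"
  show ?thesis
    by (rule C0_dominated[OF f _ _ , of _ "cmod c"])
      (use False C0_cont[OF f] in \<open>auto intro!: continuous_intros simp: norm_mult\<close>)
qed

lemma C0_diff: "f \<in> C0 X \<Longrightarrow> g \<in> C0 X \<Longrightarrow> (\<lambda>x. f x - g x) \<in> C0 X"
  using C0_add[of f X "\<lambda>x. (-1) * g x"] C0_cmult[of g X "-1"] by simp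

lemma C0_sum: "(\<And>i. i < (n::nat) \<Longrightarrow> f i \<in> C0 X) \<Longrightarrow> (\<lambda>x. \<Sum>i<n. f i x) \<in> C0 X"
proof (induction n)
  case 0 then show ?case using C0_zero by simp
next
  case (Suc n)
  then have "(\<lambda>x. (\<Sum>i<n. f i x) + f n x) \<in> C0 X" by (intro C0_add) auto
  then show ?case by simp
qed

lemma C0_mult_bounded:
  assumes f: "f \<in> C0 X" and g: "continuous_on X g" and B: "\<forall>x\<in>X. cmod (g x) \<le> B"
  shows "(\<lambda>x. f x * g x) \<in> C0 X"
proof (rule C0_dominated[OF f, of _ "max B 1"])
  show "continuous_on X (\<lambda>x. f x * g x)" using C0_cont[OF f] g by (intro continuous_intros)
  show "\<forall>x\<in>X. cmod (f x * g x) \<le> max B 1 * cmod (f x)"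
  proof
    fix x assume "x \<in> X"
    have "cmod (f x * g x) = cmod (g x) * cmod (f x)" by (simp add: norm_mult)
    also have "\<dots> \<le> max B 1 * cmod (f x)" using B \<open>x \<in> X\<close> by (intro mult_right_mono) auto
    finally show "cmod (f x * g x) \<le> max B 1 * cmod (f x)" .
  qed
qed simp

lemma C0_uniform_limit:
  assumes H: "\<And>n. H n \<in> C0 X" and lim: "uniform_limit X H h sequentially"
  shows "h \<in> C0 X"
  unfolding C0_def
proof (intro CollectI conjI allI impI)
  show "continuous_on X h"
    by (rule uniform_limit_theorem[OF _ lim]) (simp_all add: C0_cont[OF H])
  fix e :: real assume e: "e > 0"
  then have "\<forall>\<^sub>F n in sequentially. \<forall>x\<in>X. dist (H n x) (h x) < e / 2"
    using uniform_limitD[OF lim, of "e/2"] by simp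
  then obtain n where n: "\<forall>x\<in>X. dist (H n x) (h x) < e / 2"
    unfolding eventually_sequentially by blast
  obtain K where K: "compact K" "K \<subseteq> X" "\<forall>x\<in>X - K. cmod (H n x) < e / 2"
    using C0_small[OF H, of "e/2" n] e by auto
  have "cmod (h x) < e" if x: "x \<in> X - K" for x
  proof -
    have "cmod (h x) \<le> cmod (H n x) + dist (H n x) (h x)"
      by (metis dist_commute dist_norm norm_triangle_sub)
    also have "\<dots> < e / 2 + e / 2" using K(3) n x by (intro add_strict_mono) auto
    finally show ?thesis by simp
  qed
  then show "\<exists>K. compact K \<and> K \<subseteq> X \<and> (\<forall>x\<in>X - K. cmod (h x) < e)" using K by blast
qed

definition clamp :: "real \<Rightarrow> complex \<Rightarrow> complex" where
  "clamp c z = z * complex_of_real (c / max c (cmod z))"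

lemma norm_clamp: assumes "c > 0" shows "cmod (clamp c z) = cmod z * (c / max c (cmod z))"
  using assms unfolding clamp_def norm_mult norm_of_real by simp

lemma norm_clamp_le: assumes "c > 0" shows "cmod (clamp c z) \<le> c" "cmod (clamp c z) \<le> cmod z"
proof -
  have m: "max c (cmod z) > 0" using assms by simp
  have "cmod z * (c / max c (cmod z)) = c * (cmod z / max c (cmod z))" by simp
  also have "\<dots> \<le> c * 1" using m assms by (intro mult_left_mono) (auto simp: divide_le_eq_1)
  finally show "cmod (clamp c z) \<le> c" using norm_clamp[OF assms] by simp
  have "c / max c (cmod z) \<le> 1" using m by (simp add: divide_le_eq_1)
  then have "cmod z * (c / max c (cmod z)) \<le> cmod z * 1" by (intro mult_left_mono) auto
  then show "cmod (clamp c z) \<le> cmod z" using norm_clamp[OF assms] by simp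
qed

lemma clamp_id: "c > 0 \<Longrightarrow> cmod z \<le> c \<Longrightarrow> clamp c z = z"
  by (simp add: clamp_def max_def)

lemma continuous_on_clamp:
  assumes "c > 0" "continuous_on X g" shows "continuous_on X (\<lambda>x. clamp c (g x))"
proof -
  have "max c (cmod (g x)) \<noteq> 0" for x using assms(1) by (metis max.cobounded1 not_le order.strict_trans2 less_irrefl)
  then show ?thesis unfolding clamp_def using assms(2) by (intro continuous_intros) auto
qed

text \<open>If \<open>F\<close> is the limit on \<open>X0\<close> of \<open>h\<^sub>k \<in> C\<^sub>0(X)\<close> at rate \<open>2\<^sup>-\<^sup>k\<close>, the increments
  \<open>h\<^sub>k\<^sub>+\<^sub>1 - h\<^sub>k\<close> are at most \<open>2\<^sup>1\<^sup>-\<^sup>k\<close> on \<open>X0\<close>; clipping them to that size everywhere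
  keeps them in \<open>C\<^sub>0(X)\<close> and makes their series converge uniformly on all of \<open>X\<close>.\<close>
lemma C0_extends_geometric_limit:
  assumes hs: "\<And>k. hs k \<in> C0 X" and X0: "X0 \<subseteq> X"
    and conv: "\<And>k x. x \<in> X0 \<Longrightarrow> cmod (F x - hs k x) \<le> (1/2)^k"
  shows "\<exists>h\<in>C0 X. \<forall>x\<in>X0. h x = F x"
proof -
  define c where "c k = 2 * (1/2::real)^k" for k
  have cpos: "c k > 0" for k by (simp add: c_def)
  define d where "d k x = clamp (c k) (hs (Suc k) x - hs k x)" for k x
  have dC0: "d k \<in> C0 X" for k
  proof (rule C0_dominated[OF C0_diff[OF hs hs], of _ 1])
    show "continuous_on X (d k)" unfolding d_def
      by (intro continuous_on_clamp cpos continuous_intros C0_cont[OF hs])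
    show "\<forall>x\<in>X. cmod (d k x) \<le> 1 * cmod (hs (Suc k) x - hs k x)"
      using norm_clamp_le(2)[OF cpos] by (simp add: d_def)
  qed simp
  have d_X0: "d k x = hs (Suc k) x - hs k x" if x: "x \<in> X0" for k x
  proof -
    have "hs (Suc k) x - hs k x = (F x - hs k x) - (F x - hs (Suc k) x)" by simp
    then have "cmod (hs (Suc k) x - hs k x) \<le> cmod (F x - hs k x) + cmod (F x - hs (Suc k) x)"
      by (metis norm_triangle_ineq4)
    also have "\<dots> \<le> (1/2)^k + (1/2)^Suc k" by (intro add_mono conv[OF x])
    also have "\<dots> \<le> c k" by (simp add: c_def)
    finally show ?thesis unfolding d_def by (rule clamp_id[OF cpos])
  qed
  define H where "H n x = hs 0 x + (\<Sum>i<n. d i x)" for n x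
  define h where "h x = hs 0 x + (\<Sum>i. d i x)" for x
  have "summable c" unfolding c_def by (intro summable_mult summable_geometric) simp
  then have "uniform_limit X (\<lambda>n x. \<Sum>i<n. d i x) (\<lambda>x. \<Sum>i. d i x) sequentially"
    by (rule Weierstrass_m_test[rotated]) (simp add: d_def norm_clamp_le(1)[OF cpos])
  then have lim: "uniform_limit X H h sequentially"
    unfolding H_def[abs_def] h_def[abs_def] by (intro uniform_limit_intros)
  have "H n \<in> C0 X" for n
    unfolding H_def by (intro C0_add hs C0_sum dC0)
  then have "h \<in> C0 X" using lim by (rule C0_uniform_limit)
  moreover have "h x = F x" if x: "x \<in> X0" for x
  proof -
    have "(\<lambda>n. H n x) \<longlonglongrightarrow> h x" using tendsto_uniform_limitI[OF lim] x X0 by blast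
    moreover have "H n x = hs n x" for n
      using sum_lessThan_telescope[of "\<lambda>i. hs i x" n] by (simp add: H_def d_X0[OF x])
    ultimately have "(\<lambda>n. hs n x) \<longlonglongrightarrow> h x" by simp
    moreover have "(\<lambda>n. hs n x) \<longlonglongrightarrow> F x"
    proof (rule Lim_transform[OF tendsto_const])
      have "\<forall>n. norm (hs n x - F x) \<le> (1/2)^n" using conv[OF x] by (simp add: norm_minus_commute)
      then show "(\<lambda>n. hs n x - F x) \<longlonglongrightarrow> 0"
        by (rule Lim_null_comparison[OF always_eventually LIMSEQ_power_zero]) simp
    qed
    ultimately show ?thesis using LIMSEQ_unique by blast
  qed
  ultimately show ?thesis by blast
qed

context finite_fibres
begin

lemma norm_diff_wcomp_op_le:
  assumes T: "T \<in> bops X0" and h: "\<forall>x\<in>X0. cmod (h x) \<le> B" "B \<ge> 0"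
    and xi: "\<xi> \<in> l2 X0" and x: "x \<in> X0"
  shows "cmod (T \<xi> x - h x * \<xi> (\<phi> x)) \<le> opnorm X0 (\<lambda>\<xi> x. T \<xi> x - wcomp_op X0 \<phi> h \<xi> x) * nrm X0 \<xi>"
  using norm_apply_le_opnorm[OF bops_diff[OF T wcomp_op_in_bops[OF h]] xi x] xi x
  by (simp add: wcomp_op_apply)

lemma eq_wcomp_op_if_approx:
  assumes T: "T \<in> bops X0"
    and approx: "\<And>k \<xi> x. \<xi> \<in> l2 X0 \<Longrightarrow> x \<in> X0 \<Longrightarrow> cmod (T \<xi> x - hs k x * \<xi> (\<phi> x)) \<le> (1/2)^k * nrm X0 \<xi>"
    and lim: "\<And>x. x \<in> X0 \<Longrightarrow> (\<lambda>k. hs k x) \<longlonglongrightarrow> h x"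
  shows "T = wcomp_op X0 \<phi> h"
proof (intro ext)
  fix \<xi> x
  show "T \<xi> x = wcomp_op X0 \<phi> h \<xi> x"
  proof (cases "\<xi> \<in> l2 X0 \<and> x \<in> X0")
    case False
    then show ?thesis
      using bops_vanishes[OF T] l2_vanishes[OF bops_l2[OF T]] by (auto simp: wcomp_op_def)
  next
    case True
    have "(\<lambda>k. T \<xi> x - hs k x * \<xi> (\<phi> x)) \<longlonglongrightarrow> T \<xi> x - h x * \<xi> (\<phi> x)"
      using lim True by (intro tendsto_intros) auto
    moreover have "(\<lambda>k. T \<xi> x - hs k x * \<xi> (\<phi> x)) \<longlonglongrightarrow> 0"
    proof (rule Lim_null_comparison[OF always_eventually])
      show "\<forall>k. norm (T \<xi> x - hs k x * \<xi> (\<phi> x)) \<le> nrm X0 \<xi> * (1/2)^k"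
        using approx True by (simp add: mult.commute)
      show "(\<lambda>k. nrm X0 \<xi> * (1/2::real)^k) \<longlonglongrightarrow> 0"
        by (rule tendsto_mult_right_zero[OF LIMSEQ_power_zero]) simp
    qed
    ultimately have "T \<xi> x = h x * \<xi> (\<phi> x)" using LIMSEQ_unique by fastforce
    then show ?thesis using True by (simp add: wcomp_op_apply)
  qed
qed

text \<open>Testing an operator \<open>T\<close> against \<open>e\<^bsub>\<phi> x\<^esub>\<close> at \<open>x\<close> reads off the weight at \<open>x\<close>; so
  operators close in norm to \<open>wcomp_op X0 \<phi> h\<^sub>k\<close> have uniformly close weights on \<open>X0\<close>.\<close>
lemma wcomp_op_norm_limit:
  assumes X0: "X0 \<subseteq> X" and T: "T \<in> bops X0"
    and approx: "\<And>e. e > 0 \<Longrightarrow> \<exists>h\<in>C0 X. opnorm X0 (\<lambda>\<xi> x. T \<xi> x - wcomp_op X0 \<phi> h \<xi> x) < e"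
  shows "\<exists>h\<in>C0 X. T = wcomp_op X0 \<phi> h"
proof -
  have "\<forall>k. \<exists>h. h \<in> C0 X \<and> opnorm X0 (\<lambda>\<xi> x. T \<xi> x - wcomp_op X0 \<phi> h \<xi> x) < (1/2)^k"
  proof
    fix k :: nat
    have "(1/2::real)^k > 0" by simp
    then show "\<exists>h. h \<in> C0 X \<and> opnorm X0 (\<lambda>\<xi> x. T \<xi> x - wcomp_op X0 \<phi> h \<xi> x) < (1/2)^k"
      using approx by blast
  qed
  then obtain hs where hs: "\<And>k. hs k \<in> C0 X"
    "\<And>k. opnorm X0 (\<lambda>\<xi> x. T \<xi> x - wcomp_op X0 \<phi> (hs k) \<xi> x) < (1/2)^k"
    by metis
  have approx_hs: "cmod (T \<xi> x - hs k x * \<xi> (\<phi> x)) \<le> (1/2)^k * nrm X0 \<xi>"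
    if "\<xi> \<in> l2 X0" "x \<in> X0" for \<xi> x k
  proof -
    obtain B where B: "B \<ge> 0" "\<forall>x\<in>X0. cmod (hs k x) \<le> B" using C0_bounded[OF hs(1)] X0 by blast
    have "cmod (T \<xi> x - hs k x * \<xi> (\<phi> x))
        \<le> opnorm X0 (\<lambda>\<xi> x. T \<xi> x - wcomp_op X0 \<phi> (hs k) \<xi> x) * nrm X0 \<xi>"
      by (rule norm_diff_wcomp_op_le[OF T B(2,1) that])
    also have "\<dots> \<le> (1/2)^k * nrm X0 \<xi>"
      using hs(2)[of k] nrm_nonneg[of X0 \<xi>] by (intro mult_right_mono) auto
    finally show ?thesis .
  qed
  define F where "F x = T (basis_vec (\<phi> x)) x" for x
  have conv: "cmod (F x - hs k x) \<le> (1/2)^k" if x: "x \<in> X0" for k x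
  proof -
    have px: "\<phi> x \<in> X0" using maps_to x by blast
    show ?thesis
      using approx_hs[OF basis_vec_in_l2[OF px] x, of k] nrm_basis_vec[OF px]
      by (simp add: F_def basis_vec_def)
  qed
  obtain h where h: "h \<in> C0 X" "\<And>x. x \<in> X0 \<Longrightarrow> h x = F x"
    using C0_extends_geometric_limit[OF hs(1) X0 conv] by blast
  have lim: "(\<lambda>k. hs k x) \<longlonglongrightarrow> h x" if x: "x \<in> X0" for x
  proof -
    have "\<forall>k. norm (hs k x - h x) \<le> (1/2)^k" using conv[OF x] h(2)[OF x] by (simp add: norm_minus_commute)
    then have "(\<lambda>k. hs k x - h x) \<longlonglongrightarrow> 0"
      by (rule Lim_null_comparison[OF always_eventually LIMSEQ_power_zero]) simp
    then show ?thesis by (simp add: LIM_zero_iff)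
  qed
  have "T = wcomp_op X0 \<phi> h" using T approx_hs lim by (rule eq_wcomp_op_if_approx)
  then show ?thesis using h(1) by blast
qed

end

lemma norm_mult_one_minus_le:
  fixes a b :: complex
  assumes "cmod b \<le> 1" "\<epsilon> \<ge> 0" "b = 1 \<or> cmod a \<le> \<epsilon>"
  shows "cmod (a * (1 - b)) \<le> 2 * \<epsilon>"
proof (cases "b = 1")
  case False
  have "cmod (1 - b) \<le> cmod (1::complex) + cmod b" by (rule norm_triangle_ineq4)
  then have "cmod (1 - b) \<le> 2" using assms(1) by simp
  moreover have "cmod a \<le> \<epsilon>" using False assms(3) by simp
  ultimately have "cmod a * cmod (1 - b) \<le> \<epsilon> * 2" using assms(2) by (intro mult_mono) auto
  then show ?thesis by (simp add: norm_mult mult.commute)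
qed (use assms(2) in simp)

lemma compact_infdist_margin:
  fixes M T :: "pt set"
  assumes "compact M" "M \<noteq> {}" "open T" "M \<subseteq> T"
  obtains \<delta> where "\<delta> > 0" "\<And>y. infdist y M \<le> \<delta> \<Longrightarrow> y \<in> T"
proof (cases "- T = {}")
  case True then show ?thesis using that[of 1] by auto
next
  case False
  obtain a b where ab: "a \<in> M" "b \<in> - T" "dist a b = setdist M (- T)"
    using setdist_compact_closed[OF assms(1) closed_Compl[OF assms(3)] assms(2) False] by blast
  then have sp: "setdist M (- T) > 0" using assms(4) by (metis ComplD subsetD zero_less_dist_iff)
  show ?thesis
  proof (rule that[of "setdist M (- T) / 2"])
    fix y assume y: "infdist y M \<le> setdist M (- T) / 2"
    show "y \<in> T"
    proof (rule ccontr)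
      assume "y \<notin> T"
      then have "setdist (- T) M \<le> setdist {y} M" by (intro setdist_le_sing) simp
      then have "setdist M (- T) \<le> infdist y M" by (simp add: setdist_sym infdist_eq_setdist)
      then show False using y sp by simp
    qed
  qed (use sp in simp)
qed

lemma C0_cutoff:
  assumes X: "compact X \<or> openin (top_of_set S2) X" and M: "compact M" "M \<subseteq> X"
  shows "\<exists>g\<in>C0 X. (\<forall>y\<in>M. g y = 1) \<and> (\<forall>y\<in>X. cmod (g y) \<le> 1)"
proof (cases "compact X \<or> M = {}")
  case True
  show ?thesis
  proof (cases "M = {}")
    case True
    then show ?thesis by (intro bexI[of _ "\<lambda>x. 0"]) (simp_all add: C0_zero)
  next
    case False
    then have "(\<lambda>y. 1) \<in> C0 X" using \<open>compact X \<or> M = {}\<close> by (auto simp: C0_def intro!: exI[of _ X])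
    then show ?thesis by auto
  qed
next
  case False
  then obtain T where T: "open T" "X = S2 \<inter> T" using X openin_open by metis
  obtain \<delta> where \<delta>: "\<delta> > 0" "\<And>y. infdist y M \<le> \<delta> \<Longrightarrow> y \<in> T"
    using compact_infdist_margin[OF M(1) _ T(1)] False M(2) T(2) by blast
  define g where "g y = complex_of_real (max 0 (1 - infdist y M / \<delta>))" for y
  have "g \<in> C0 X" unfolding C0_def
  proof (intro CollectI conjI allI impI)
    show "continuous_on X g" unfolding g_def using \<delta>(1) by (intro continuous_intros) auto
    fix e :: real assume e: "e > 0"
    define K where "K = S2 \<inter> {y. infdist y M \<le> \<delta>}"
    have "closed {y. infdist y M \<le> \<delta>}"
      by (rule closed_Collect_le) (intro continuous_intros)+
    then have "compact K" unfolding K_def by (intro compact_Int_closed) (simp_all add: S2_def)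
    moreover have "K \<subseteq> X" using T \<delta>(2) by (auto simp: K_def)
    moreover have "cmod (g y) < e" if "y \<in> X - K" for y
    proof -
      have "1 - infdist y M / \<delta> < 0" using that T \<delta>(1) by (auto simp: K_def field_simps)
      then show ?thesis using e by (simp add: g_def max_def)
    qed
    ultimately show "\<exists>K. compact K \<and> K \<subseteq> X \<and> (\<forall>x\<in>X - K. cmod (g x) < e)" by blast
  qed
  moreover have "cmod (g y) \<le> 1" for y
    using \<delta>(1) infdist_nonneg[of y M] by (simp add: g_def)
  moreover have "g y = 1" if "y \<in> M" for y
    using that by (simp add: g_def)
  ultimately show ?thesis by blast
qed

section \<open>The representations \<open>\<rho>\<^sub>n\<close>\<close>

locale rational_map_domain = rational_map +
  fixes X :: "pt set"
  assumes domain: "X = julia (ratmap p q) \<or> X = fatou (ratmap p q) \<or> X = S2"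
begin

abbreviation "X0 \<equiv> Xcirc R X"

lemma X_subset_S2: "X \<subseteq> S2"
  using domain fatou_subset_S2 by (auto simp: julia_def)

lemma compact_or_openin_X: "compact X \<or> openin (top_of_set S2) X"
proof -
  consider "X = julia R" | "X = fatou R" | "X = S2" using domain by blast
  then show ?thesis
  proof cases
    case 1 then show ?thesis using compact_julia by simp
  next
    case 2 then show ?thesis using openin_fatou by simp
  next
    case 3 then show ?thesis by (simp add: S2_def)
  qed
qed

lemma ratmap_in_X: "x \<in> X \<Longrightarrow> R x \<in> X"
proof -
  assume x: "x \<in> X"
  consider "X = julia R" | "X = fatou R" | "X = S2" using domain by blast
  then show ?thesis
    by cases (use x julia_ratmap_image fatou_ratmap_image ratmap_in_S2 in simp_all)
qed

lemma funpow_ratmap_in_X: "x \<in> X \<Longrightarrow> (R ^^ n) x \<in> X"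
  by (induction n) (auto simp: ratmap_in_X)

lemma Xcirc_subset_X: "X0 \<subseteq> X"
  by (auto simp: Xcirc_def)

lemma ratmap_in_Xcirc:
  assumes x: "x \<in> X0" shows "R x \<in> X0"
proof -
  have xX: "x \<in> X" using x Xcirc_subset_X by blast
  have nr: "\<not> (\<exists>y \<in> fixed_pts R X \<union> branch_pts R X. \<exists>m n. (R ^^ m) x = (R ^^ n) y)"
    using x by (simp add: Xcirc_def)
  have "\<not> (\<exists>y \<in> fixed_pts R X \<union> branch_pts R X. \<exists>m n. (R ^^ m) (R x) = (R ^^ n) y)"
  proof
    assume "\<exists>y \<in> fixed_pts R X \<union> branch_pts R X. \<exists>m n. (R ^^ m) (R x) = (R ^^ n) y"
    then obtain y m n where y: "y \<in> fixed_pts R X \<union> branch_pts R X" "(R ^^ m) (R x) = (R ^^ n) y"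
      by blast
    have "(R ^^ Suc m) x = (R ^^ n) y" using y(2) by (simp only: funpow_Suc_right comp_apply)
    then show False using nr y(1) by blast
  qed
  then show ?thesis using ratmap_in_X[OF xX] by (simp add: Xcirc_def)
qed

lemma funpow_ratmap_in_Xcirc: "x \<in> X0 \<Longrightarrow> (R ^^ n) x \<in> X0"
  by (induction n) (auto simp: ratmap_in_Xcirc)

lemma finite_fibres_funpow: "finite_fibres X0 (R ^^ n) ((d+1)^n)"
proof
  show "\<forall>x\<in>X0. (R ^^ n) x \<in> X0" using funpow_ratmap_in_Xcirc by blast
  show "\<forall>y. finite {x \<in> X0. (R ^^ n) x = y} \<and> card {x \<in> X0. (R ^^ n) x = y} \<le> (d + 1) ^ n"
  proof
    fix y
    have sub: "{x \<in> X0. (R ^^ n) x = y} \<subseteq> {x \<in> S2. (R ^^ n) x = y}"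
      using Xcirc_subset_X X_subset_S2 by blast
    moreover have fin: "finite {x \<in> S2. (R ^^ n) x = y}" using funpow_ratmap_fibre_bound by blast
    ultimately have "card {x \<in> X0. (R ^^ n) x = y} \<le> card {x \<in> S2. (R ^^ n) x = y}"
      by (intro card_mono)
    then show "finite {x \<in> X0. (R ^^ n) x = y} \<and> card {x \<in> X0. (R ^^ n) x = y} \<le> (d + 1) ^ n"
      using funpow_ratmap_fibre_bound[of n y] finite_subset[OF sub fin] by linarith
  qed
qed

lemma continuous_on_funpow_ratmap_X: "continuous_on X (R ^^ n)"
  using continuous_on_funpow_ratmap X_subset_S2 continuous_on_subset by blast

lemma rho_in_bops: "f \<in> C0 X \<Longrightarrow> rho R X n f \<in> bops X0"
proof -
  assume "f \<in> C0 X"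
  then obtain B where "B \<ge> 0" "\<forall>x\<in>X0. cmod (f x) \<le> B"
    using C0_bounded Xcirc_subset_X by blast
  then show ?thesis
    unfolding rho_eq_wcomp_op by (rule finite_fibres.wcomp_op_in_bops[OF finite_fibres_funpow, rotated])
qed

lemma C0_mult_comp:
  assumes f: "f \<in> C0 X" and g: "g \<in> C0 X" shows "(\<lambda>x. f x * g ((R ^^ m) x)) \<in> C0 X"
proof -
  have "continuous_on X (\<lambda>x. g ((R ^^ m) x))"
    by (rule continuous_on_compose2[OF C0_cont[OF g] continuous_on_funpow_ratmap_X])
      (use funpow_ratmap_in_X in auto)
  moreover obtain B where "\<forall>x\<in>X. cmod (g x) \<le> B" using C0_bounded[OF g] by blast
  then have "\<forall>x\<in>X. cmod (g ((R ^^ m) x)) \<le> B" using funpow_ratmap_in_X by blast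
  ultimately show ?thesis by (rule C0_mult_bounded[OF f])
qed

lemma rho_comp_rho:
  assumes f: "f \<in> C0 X" and g: "g \<in> C0 X"
  shows "rho R X m f \<circ> rho R X n g = rho R X (m + n) (\<lambda>x. f x * g ((R ^^ m) x))"
proof
  fix \<xi>
  show "(rho R X m f \<circ> rho R X n g) \<xi> = rho R X (m + n) (\<lambda>x. f x * g ((R ^^ m) x)) \<xi>"
  proof (cases "\<xi> \<in> l2 X0")
    case False
    then show ?thesis by (simp add: rho_eq_wcomp_op wcomp_op_def zero_in_l2 fun_eq_iff)
  next
    case True
    have l: "rho R X n g \<xi> \<in> l2 X0" by (rule bops_l2[OF rho_in_bops[OF g] True])
    have e: "(R ^^ n) ((R ^^ m) x) = (R ^^ (m + n)) x" for x
      by (simp only: add.commute[of m n] funpow_add comp_apply)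
    show ?thesis
    proof
      fix x
      show "(rho R X m f \<circ> rho R X n g) \<xi> x = rho R X (m + n) (\<lambda>x. f x * g ((R ^^ m) x)) \<xi> x"
        using l True funpow_ratmap_in_Xcirc[of x m] e[of x] by (simp add: rho_eq_wcomp_op wcomp_op_def)
    qed
  qed
qed

lemma op_closure_prod_subset_E:
  "op_closure X0 (prodset (Eset R X m) (Eset R X n)) \<subseteq> Eset R X (m + n)"
proof
  fix T assume T: "T \<in> op_closure X0 (prodset (Eset R X m) (Eset R X n))"
  have "\<exists>h\<in>C0 X. opnorm X0 (\<lambda>\<xi> x. T \<xi> x - wcomp_op X0 (R ^^ (m + n)) h \<xi> x) < e" if "e > 0" for e
  proof -
    obtain A where A: "A \<in> prodset (Eset R X m) (Eset R X n)" "opnorm X0 (\<lambda>\<xi> x. T \<xi> x - A \<xi> x) < e"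
      using T \<open>e > 0\<close> unfolding op_closure_def by blast
    then obtain f g where fg: "f \<in> C0 X" "g \<in> C0 X" "A = rho R X m f \<circ> rho R X n g"
      unfolding prodset_def Eset_def by blast
    then have "A = wcomp_op X0 (R ^^ (m + n)) (\<lambda>x. f x * g ((R ^^ m) x))"
      using rho_comp_rho by (simp add: rho_eq_wcomp_op)
    then show ?thesis using A(2) C0_mult_comp[OF fg(1,2)] by blast
  qed
  moreover have "T \<in> bops X0" using T by (simp add: op_closure_def)
  ultimately obtain h where "h \<in> C0 X" "T = wcomp_op X0 (R ^^ (m + n)) h"
    using finite_fibres.wcomp_op_norm_limit[OF finite_fibres_funpow Xcirc_subset_X] by blast
  then show "T \<in> Eset R X (m + n)" by (simp add: Eset_def rho_eq_wcomp_op)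
qed

text \<open>Outside a compact set \<open>K\<close> the weight \<open>h\<close> is below \<open>\<epsilon>\<close>, and on \<open>K\<close> the cut-off
  \<open>g \<circ> R\<^sup>m\<close> equals \<open>1\<close>; so \<open>\<rho>\<^sub>m\<^sub>+\<^sub>n(h) - \<rho>\<^sub>m(h) \<rho>\<^sub>n(g) = \<rho>\<^sub>m\<^sub>+\<^sub>n(h \<cdot> (1 - g \<circ> R\<^sup>m))\<close> is small.\<close>
lemma E_subset_op_closure_prod:
  "Eset R X (m + n) \<subseteq> op_closure X0 (prodset (Eset R X m) (Eset R X n))"
proof
  fix T assume "T \<in> Eset R X (m + n)"
  then obtain h where h: "h \<in> C0 X" "T = rho R X (m + n) h" by (auto simp: Eset_def)
  define s where "s = sqrt (real ((d+1)^(m+n)))"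
  have "\<exists>A\<in>prodset (Eset R X m) (Eset R X n). opnorm X0 (\<lambda>\<xi> x. T \<xi> x - A \<xi> x) < e" if e: "e > 0" for e
  proof -
    define \<epsilon> where "\<epsilon> = e / (2 * (s + 1))"
    have s0: "s \<ge> 0" by (simp add: s_def)
    have "2 * \<epsilon> * s = e * (s / (s + 1))" using s0 by (simp add: \<epsilon>_def field_simps)
    also have "\<dots> < e * 1" using e s0 by (intro mult_strict_left_mono) auto
    finally have "2 * \<epsilon> * s < e" by simp
    moreover have "\<epsilon> > 0" using e s0 by (simp add: \<epsilon>_def)
    ultimately have \<epsilon>: "\<epsilon> > 0" "2 * \<epsilon> * s < e" by simp_all
    obtain K where K: "compact K" "K \<subseteq> X" "\<forall>x\<in>X - K. cmod (h x) < \<epsilon>"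
      using C0_small[OF h(1) \<epsilon>(1)] by blast
    have "compact ((R ^^ m) ` K)"
      using compact_continuous_image[OF continuous_on_subset[OF continuous_on_funpow_ratmap_X K(2)] K(1)] .
    moreover have "(R ^^ m) ` K \<subseteq> X" using K(2) funpow_ratmap_in_X by blast
    ultimately obtain g where g: "g \<in> C0 X" "\<forall>y\<in>(R ^^ m) ` K. g y = 1" "\<forall>y\<in>X. cmod (g y) \<le> 1"
      using C0_cutoff[OF compact_or_openin_X] by blast
    define A where "A = rho R X m h \<circ> rho R X n g"
    define k where "k x = h x * (1 - g ((R ^^ m) x))" for x
    have "A = wcomp_op X0 (R ^^ (m + n)) (\<lambda>x. h x * g ((R ^^ m) x))"
      using rho_comp_rho[OF h(1) g(1)] by (simp add: A_def rho_eq_wcomp_op)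
    then have diff: "(\<lambda>\<xi> x. T \<xi> x - A \<xi> x) = wcomp_op X0 (R ^^ (m + n)) k"
      using h(2) by (auto simp: rho_eq_wcomp_op wcomp_op_def k_def fun_eq_iff right_diff_distrib left_diff_distrib)
    have "cmod (k x) \<le> 2 * \<epsilon>" if "x \<in> X0" for x
    proof -
      have "x \<in> X" using that Xcirc_subset_X by blast
      then show ?thesis
        unfolding k_def using g K(3) funpow_ratmap_in_X \<epsilon>(1)
        by (intro norm_mult_one_minus_le) (auto simp: less_imp_le)
    qed
    then have "opnorm X0 (\<lambda>\<xi> x. T \<xi> x - A \<xi> x) \<le> 2 * \<epsilon> * s"
      unfolding diff s_def using \<epsilon>(1)
      by (intro finite_fibres.opnorm_wcomp_op_le[OF finite_fibres_funpow]) auto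
    moreover have "A \<in> prodset (Eset R X m) (Eset R X n)"
      unfolding A_def prodset_def Eset_def using h(1) g(1) by blast
    ultimately show ?thesis using \<epsilon>(2) by (intro bexI[of _ A]) auto
  qed
  then show "T \<in> op_closure X0 (prodset (Eset R X m) (Eset R X n))"
    using rho_in_bops h unfolding op_closure_def by blast
qed

lemma op_closure_prod_eq_E:
  "op_closure X0 (prodset (Eset R X m) (Eset R X n)) = Eset R X (m + n)"
  using op_closure_prod_subset_E E_subset_op_closure_prod by blast

lemma E_subset_Cstar_rho: "Eset R X n \<subseteq> Cstar_rho R X"
  unfolding Cstar_rho_def cstar_gen_def
proof (rule Inter_greatest)
  fix A assume "A \<in> {A. A \<subseteq> bops X0 \<and> Eset R X 0 \<union> Eset R X 1 \<subseteq> A \<and>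
       (\<forall>T\<in>A. \<forall>S\<in>A. (\<lambda>\<xi> x. T \<xi> x + S \<xi> x) \<in> A) \<and>
       (\<forall>c. \<forall>T\<in>A. (\<lambda>\<xi> x. c * T \<xi> x) \<in> A) \<and>
       (\<forall>T\<in>A. \<forall>S\<in>A. T \<circ> S \<in> A) \<and>
       (\<forall>T\<in>A. \<exists>S\<in>A. is_adjoint X0 T S) \<and>
       op_closure X0 A \<subseteq> A}"
  then have E01: "Eset R X 0 \<subseteq> A" "Eset R X 1 \<subseteq> A" and comp: "\<forall>T\<in>A. \<forall>S\<in>A. T \<circ> S \<in> A"
    and closed: "op_closure X0 A \<subseteq> A" by auto
  show "Eset R X n \<subseteq> A"
  proof (induction n)
    case (Suc n)
    have "prodset (Eset R X n) (Eset R X 1) \<subseteq> A"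
      using Suc.IH E01(2) comp unfolding prodset_def by blast
    then have "op_closure X0 (prodset (Eset R X n) (Eset R X 1)) \<subseteq> A"
      using closed unfolding op_closure_def by blast
    then show ?case using op_closure_prod_eq_E[of n 1] by simp
  qed (use E01 in simp)
qed

end

theorem proposition3p2p4:
  fixes p q :: "complex poly" and X :: "(real \<times> complex) set"
  assumes "coprime p q"
    and "max (degree p) (degree q) \<ge> 2"
    and "X = julia (ratmap p q) \<or> X = fatou (ratmap p q) \<or> X = S2"
    and "X \<noteq> {}"
  shows "(\<forall>m n. op_closure (Xcirc (ratmap p q) X)
                   (prodset (Eset (ratmap p q) X m) (Eset (ratmap p q) X n))
                 = Eset (ratmap p q) X (m + n))
       \<and> (\<forall>n. Eset (ratmap p q) X n \<subseteq> Cstar_rho (ratmap p q) X)"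
proof -
  interpret rational_map_domain p q X
    by unfold_locales (use assms(1-3) in auto)
  show ?thesis using op_closure_prod_eq_E E_subset_Cstar_rho by blast
qed

end
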